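(* Let all notation be as in the context. Define $$2\mathcal F=\mathrm{res}_{\infty_Q}\big(P\Phi_1\,dQ\big)+\mathrm{res}_{\infty_P}\big(Q\Phi_2\,dP\big)+\tfrac12\,\mathrm{res}_{\infty_Q}\big(P^2Q\,dQ\big)+t\,\mathrm{res}_{\lambda=\infty}\Big(\frac{V_1(Q)+V_2(P)-PQ}{\lambda}\,d\lambda\Big)+2t^2\ln\gamma .$$ Then also $$2\mathcal F=\sum_{K}u_KU_K+\sum_J v_JV_J+\tfrac12\,\mathrm{res}_{\infty_Q}\big(P^2Q\,dQ\big)+t\,\mathrm{res}_{\lambda=\infty}\Big(\frac{V_1(Q)+V_2(P)-PQ}{\lambda}\,d\lambda\Big)+2t^2\ln\gamma ,$$ and $\mathcal F$ is (up to an additive constant) the planar free energy, i.e. it satisfies $\partial_{u_K}\mathcal F=U_K$ for $1\le K\le d_1+1$ and $\partial_{v_J}\mathcal F=V_J$ for $1\le J\le d_2+1$.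
   Context: Fix integers $d_1,d_2\ge 1$. For complex parameters $\gamma\neq 0$, $\alpha_0,\dots,\alpha_{d_2}$, $\beta_0,\dots,\beta_{d_1}$ put $Q(\lambda)=\gamma\lambda+\sum_{j=0}^{d_2}\alpha_j\lambda^{-j}$ and $P(\lambda)=\frac{\gamma}{\lambda}+\sum_{j=0}^{d_1}\beta_j\lambda^j$, meromorphic on the Riemann sphere of $\lambda$; $\infty_Q$ denotes $\lambda=\infty$ and $\infty_P$ denotes $\lambda=0$. All residues are ordinary residues of meromorphic differentials at the indicated point (so $\mathrm{res}_{\lambda=\infty}\frac{d\lambda}{\lambda}=-1$). Define $t=\mathrm{res}_{\infty_Q}P\,dQ$, $u_K=-\mathrm{res}_{\infty_Q}PQ^{-K}dQ$ ($1\le K\le d_1+1$), $v_J=-\mathrm{res}_{\infty_P}QP^{-J}dP$ ($1\le J\le d_2+1$), $V_1(x)=\sum_{K=1}^{d_1+1}\frac{u_K}{K}x^K$, $V_2(y)=\sum_{J=1}^{d_2+1}\frac{v_J}{J}y^J$. Expanding in the local parameter $1/Q$ near $\infty_Q$ and $1/P$ near $\infty_P$, one has $P=V_1'(Q)-\frac tQ+\sum_{K\ge1}KU_KQ^{-K-1}$ and $Q=V_2'(P)-\frac tP+\sum_{J\ge1}JV_JP^{-J-1}$; this defines the numbers $U_K,V_J$. The exterior potentials are $\Phi_1=-\sum_{K\ge1}U_KQ^{-K}$ (near $\infty_Q$) and $\Phi_2=-\sum_{J\ge1}V_JP^{-J}$ (near $\infty_P$). The $d_1+d_2+3$ quantities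 $u_1,\dots,u_{d_1+1},v_1,\dots,v_{d_2+1},t$ are used as independent local coordinates on the parameter space $(\gamma,\alpha_j,\beta_j)$ (where this change of variables is locally biholomorphic); $\partial_{u_K},\partial_{v_J},\partial_t$ are partial derivatives in these coordinates. *)

theory Defs
  imports "HOL-Analysis.Analysis" "HOL-Computational_Algebra.Formal_Laurent_Series"
begin

text \<open>All objects are formal Laurent series in a local coordinate x centred at the point
  under consideration.  At infinity_Q (lambda = infinity) the coordinate is x = 1/lambda;
  at infinity_P (lambda = 0) the coordinate is x = lambda.  In the coordinate centred at the
  pole of a function A we have A = gamma/x + sum a_j x^j, and the other function is
  B = gamma x + sum b_j x^(-j).\<close>

definition big :: "complex \<Rightarrow> (nat \<Rightarrow> complex) \<Rightarrow> nat \<Rightarrow> complex fls" where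
  "big \<gamma> a d = fls_const \<gamma> * fls_X_inv + (\<Sum>j\<le>d. fls_const (a j) * fls_X ^ j)"

definition small :: "complex \<Rightarrow> (nat \<Rightarrow> complex) \<Rightarrow> nat \<Rightarrow> complex fls" where
  "small \<gamma> b e = fls_const \<gamma> * fls_X + (\<Sum>j\<le>e. fls_const (b j) * fls_X_inv ^ j)"

text \<open>Q and P in the coordinate z = 1/lambda at infinity_Q, and in the coordinate lambda
  at infinity_P.\<close>
definition Qz where "Qz d1 d2 \<gamma> \<alpha> \<beta> = big \<gamma> \<alpha> d2"
definition Pz where "Pz d1 d2 \<gamma> \<alpha> \<beta> = small \<gamma> \<beta> d1"
definition Pl where "Pl d1 d2 \<gamma> \<alpha> \<beta> = big \<gamma> \<beta> d1"
definition Ql where "Ql d1 d2 \<gamma> \<alpha> \<beta> = small \<gamma> \<alpha> d2"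

definition fres :: "complex fls \<Rightarrow> complex fls \<Rightarrow> complex" where
  "fres f g = fls_residue (f * fls_deriv g)"

text \<open>The local parameter 1/A as a power series in x, and the expansion of f in powers of
  the local parameter 1/A: coefficient of A^n.\<close>
definition locpar :: "complex fls \<Rightarrow> complex fps" where
  "locpar A = fls_regpart (inverse A)"

definition exp_coeff :: "complex fls \<Rightarrow> complex fls \<Rightarrow> int \<Rightarrow> complex" where
  "exp_coeff A f n = fls_nth (fls_compose_fps f (fps_inv (locpar A))) (- n)"

definition tt where "tt d1 d2 \<gamma> \<alpha> \<beta> = fres (Pz d1 d2 \<gamma> \<alpha> \<beta>) (Qz d1 d2 \<gamma> \<alpha> \<beta>)"

definition uu where "uu d1 d2 \<gamma> \<alpha> \<beta> K =
  - fres (Pz d1 d2 \<gamma> \<alpha> \<beta> * inverse (Qz d1 d2 \<gamma> \<alpha> \<beta>) ^ K) (Qz d1 d2 \<gamma> \<alpha> \<beta>)"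

definition vv where "vv d1 d2 \<gamma> \<alpha> \<beta> J =
  - fres (Ql d1 d2 \<gamma> \<alpha> \<beta> * inverse (Pl d1 d2 \<gamma> \<alpha> \<beta>) ^ J) (Pl d1 d2 \<gamma> \<alpha> \<beta>)"

text \<open>P = V_1'(Q) - t/Q + sum K U_K Q^(-K-1): K U_K is the coefficient of Q^(-K-1).\<close>
definition UU where "UU d1 d2 \<gamma> \<alpha> \<beta> K =
  exp_coeff (Qz d1 d2 \<gamma> \<alpha> \<beta>) (Pz d1 d2 \<gamma> \<alpha> \<beta>) (- (int K + 1)) / of_nat K"

definition VV where "VV d1 d2 \<gamma> \<alpha> \<beta> J =
  exp_coeff (Pl d1 d2 \<gamma> \<alpha> \<beta>) (Ql d1 d2 \<gamma> \<alpha> \<beta>) (- (int J + 1)) / of_nat J"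

definition V1 :: "nat \<Rightarrow> nat \<Rightarrow> complex \<Rightarrow> (nat \<Rightarrow> complex) \<Rightarrow> (nat \<Rightarrow> complex) \<Rightarrow> complex fls \<Rightarrow> complex fls" where
  "V1 d1 d2 \<gamma> \<alpha> \<beta> x = (\<Sum>K\<in>{1..d1+1}. fls_const (uu d1 d2 \<gamma> \<alpha> \<beta> K / of_nat K) * x ^ K)"

definition V2 :: "nat \<Rightarrow> nat \<Rightarrow> complex \<Rightarrow> (nat \<Rightarrow> complex) \<Rightarrow> (nat \<Rightarrow> complex) \<Rightarrow> complex fls \<Rightarrow> complex fls" where
  "V2 d1 d2 \<gamma> \<alpha> \<beta> y = (\<Sum>J\<in>{1..d2+1}. fls_const (vv d1 d2 \<gamma> \<alpha> \<beta> J / of_nat J) * y ^ J)"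

text \<open>Phi_1 = - sum_K U_K Q^(-K), a power series in the local parameter 1/Q, rewritten in the
  coordinate z = 1/lambda; likewise Phi_2 in the coordinate lambda.\<close>
definition Phi1 where "Phi1 d1 d2 \<gamma> \<alpha> \<beta> =
  fps_to_fls (fps_compose (Abs_fps (\<lambda>n. if n = 0 then 0 else - UU d1 d2 \<gamma> \<alpha> \<beta> n))
              (locpar (Qz d1 d2 \<gamma> \<alpha> \<beta>)))"

definition Phi2 where "Phi2 d1 d2 \<gamma> \<alpha> \<beta> =
  fps_to_fls (fps_compose (Abs_fps (\<lambda>n. if n = 0 then 0 else - VV d1 d2 \<gamma> \<alpha> \<beta> n))
              (locpar (Pl d1 d2 \<gamma> \<alpha> \<beta>)))"

text \<open>The common tail: 1/2 res_{inf_Q} P^2 Q dQ + t res_{lambda=inf} (V1(Q)+V2(P)-PQ)/lambda dlambda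
  + 2 t^2 ln gamma, with lg a chosen branch of the logarithm.\<close>
definition tail where "tail d1 d2 lg \<gamma> \<alpha> \<beta> =
  (let P = Pz d1 d2 \<gamma> \<alpha> \<beta>; Q = Qz d1 d2 \<gamma> \<alpha> \<beta>; t = tt d1 d2 \<gamma> \<alpha> \<beta> in
   fres (P ^ 2 * Q) Q / 2
   + t * fres ((V1 d1 d2 \<gamma> \<alpha> \<beta> Q + V2 d1 d2 \<gamma> \<alpha> \<beta> P - P * Q) * fls_X) fls_X_inv
   + 2 * t ^ 2 * lg \<gamma>)"

definition twoF where "twoF d1 d2 lg \<gamma> \<alpha> \<beta> =
  fres (Pz d1 d2 \<gamma> \<alpha> \<beta> * Phi1 d1 d2 \<gamma> \<alpha> \<beta>) (Qz d1 d2 \<gamma> \<alpha> \<beta>)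
  + fres (Ql d1 d2 \<gamma> \<alpha> \<beta> * Phi2 d1 d2 \<gamma> \<alpha> \<beta>) (Pl d1 d2 \<gamma> \<alpha> \<beta>)
  + tail d1 d2 lg \<gamma> \<alpha> \<beta>"

definition FF where "FF d1 d2 lg \<gamma> \<alpha> \<beta> = twoF d1 d2 lg \<gamma> \<alpha> \<beta> / 2"

text \<open>A parameter point is a vector p with indices 0 .. d1+d2+2:
  gamma = p 0, alpha_j = p (1+j) (j \<le> d2), beta_j = p (d2+2+j) (j \<le> d1).\<close>
definition pg :: "(nat \<Rightarrow> complex) \<Rightarrow> complex" where "pg p = p 0"
definition pa :: "(nat \<Rightarrow> complex) \<Rightarrow> nat \<Rightarrow> complex" where "pa p j = p (Suc j)"
definition pb :: "nat \<Rightarrow> (nat \<Rightarrow> complex) \<Rightarrow> nat \<Rightarrow> complex" where "pb d2 p j = p (d2 + 2 + j)"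

abbreviation NN :: "nat \<Rightarrow> nat \<Rightarrow> nat" where "NN d1 d2 \<equiv> d1 + d2 + 3"

definition coord :: "nat \<Rightarrow> nat \<Rightarrow> nat \<Rightarrow> (nat \<Rightarrow> complex) \<Rightarrow> complex" where
  "coord d1 d2 i p =
     (if i \<le> d1 then uu d1 d2 (pg p) (pa p) (pb d2 p) (i + 1)
      else if i \<le> d1 + d2 + 1 then vv d1 d2 (pg p) (pa p) (pb d2 p) (i - d1)
      else tt d1 d2 (pg p) (pa p) (pb d2 p))"

definition jac :: "nat \<Rightarrow> nat \<Rightarrow> (nat \<Rightarrow> complex) \<Rightarrow> nat \<Rightarrow> nat \<Rightarrow> complex" where
  "jac d1 d2 p i j = deriv (\<lambda>x. coord d1 d2 i (p(j := x))) (p j)"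

definition jac_nonsingular :: "nat \<Rightarrow> nat \<Rightarrow> (nat \<Rightarrow> complex) \<Rightarrow> bool" where
  "jac_nonsingular d1 d2 p \<longleftrightarrow>
     (\<forall>h. (\<forall>i<NN d1 d2. (\<Sum>j<NN d1 d2. jac d1 d2 p i j * h j) = 0) \<longrightarrow> (\<forall>j<NN d1 d2. h j = 0))"

text \<open>Partial derivative in the coordinates (u,v,t): c is a coordinate line through p in
  direction of coordinate number i (all other coordinates kept fixed), and G has derivative D
  along it.  Since the coordinate change is locally biholomorphic at p, such lines exist
  and are unique, and this is exactly the partial derivative.\<close>
definition coord_line :: "nat \<Rightarrow> nat \<Rightarrow> nat \<Rightarrow> (nat \<Rightarrow> complex) \<Rightarrow> (complex \<Rightarrow> nat \<Rightarrow> complex) \<Rightarrow> bool" where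
  "coord_line d1 d2 i p c \<longleftrightarrow>
     (\<forall>j<NN d1 d2. c 0 j = p j \<and> (\<lambda>s. c s j) field_differentiable (at 0)) \<and>
     (\<forall>\<^sub>F s in nhds 0. \<forall>k<NN d1 d2. coord d1 d2 k (c s) = coord d1 d2 k p + (if k = i then s else 0))"

definition has_partial :: "nat \<Rightarrow> nat \<Rightarrow> ((nat \<Rightarrow> complex) \<Rightarrow> complex) \<Rightarrow> nat \<Rightarrow> (nat \<Rightarrow> complex) \<Rightarrow> complex \<Rightarrow> bool" where
  "has_partial d1 d2 G i p D \<longleftrightarrow>
     (\<forall>c. coord_line d1 d2 i p c \<longrightarrow> ((\<lambda>s. G (c s)) has_field_derivative D) (at 0))"

end

(* Everything is computed with formal Laurent series in a local coordinate at infinity_Q or at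
   infinity_P, where one of Q, P has a simple pole; call it A and the other one B.

   The coefficient of A^(-n) in the expansion of a series f in the local parameter 1/A is
   -res(f A^(n-1) dA).  Pairing Phi_1 = - sum U_K Q^(-K) with P dQ therefore gives sum u_K U_K,
   the terms with K > d1 + 1 having no residue, and likewise at infinity_P: this is the first
   identity.

   For the derivatives, vary the parameters along a curve on which all coordinates except one
   u_K or v_J stay constant, in particular t.  With Omega = dP/ds dQ - dQ/ds dP the variation of
   P dQ, one has du_K/ds = -res(Q^(-K) Omega) and dU_K/ds = -res(Q^K Omega)/K.  The key identity
   d(V_1(Q) + Phi_1) = (P + t/Q) dQ, proved by comparing residues against all powers of Q, allows
   pairing Omega with V_1(Q) + Phi_1.  Integrating by parts through a primitive S of
   P dQ - t dlambda/lambda, whose reflection lambda -> 1/lambda yields the primitive at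
   infinity_P, shows that sum u_K dU_K + sum v_J dV_J + d(tail) equals
   sum du_K U_K + sum dv_J V_J; the term 2 t^2 ln gamma cancels the constant terms
   t dgamma/gamma.  So d(2F) = 2 (sum du_K U_K + sum dv_J V_J), which is 2 U_K along the
   u_K-line and 2 V_J along the v_J-line. *)

theory Submission
  imports Defs
begin

unbundle Formal_Laurent_Series.fps_syntax
unbundle Formal_Power_Series.fps_syntax

section \<open>Residues and coefficient bounds of formal Laurent series\<close>

lemma fls_deriv_power_int:
  fixes f :: "complex fls"
  shows "fls_deriv (f powi n) = of_int n * f powi (n - 1) * fls_deriv f"
proof (cases "f = 0")
  case True
  then show ?thesis by (simp add: power_int_0_left_if)
next
  case nz: False
  show ?thesis
  proof (cases "n \<ge> 0")
    case True
    then obtain m where n: "n = int m" by (metis nonneg_int_cases)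
    show ?thesis
    proof (cases m)
      case 0 then show ?thesis using n by simp
    next
      case (Suc k)
      have "n - 1 = int k" using n Suc by simp
      then have "f powi n = f ^ m" "f powi (n - 1) = f ^ k" using n by (simp_all only: power_int_of_nat)
      then show ?thesis using n Suc by (simp only: fls_deriv_power) simp
    qed
  next
    case False
    then obtain m where n: "n = - int m" and m: "m > 0"
      by (metis neg_int_cases not_le of_nat_0_less_iff)
    have "fls_deriv (f powi n) = - fls_deriv (f ^ m) * (inverse (f ^ m))\<^sup>2"
      using n by (simp add: power_int_def nat_minus_as_int power_inverse fls_inverse_deriv)
    also have "\<dots> = - (of_nat m * f ^ (m - 1) * fls_deriv f) * (inverse (f ^ m))\<^sup>2"
      by (simp add: fls_deriv_power)
    also have "\<dots> = of_int n * f powi (n - 1) * fls_deriv f"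
    proof -
      have "f powi (n - 1) = inverse (f ^ (m + 1))"
        using n by (simp add: power_int_def nat_add_distrib power_inverse)
      moreover have "f ^ (m - 1) * (inverse (f ^ m))\<^sup>2 = inverse (f ^ (m + 1))"
        using m nz by (cases m) (auto simp: field_simps power2_eq_square)
      ultimately show ?thesis using n by (simp add: algebra_simps)
    qed
    finally show ?thesis .
  qed
qed

text \<open>For k \<noteq> -1 the differential A^k dA is exact, d(A^(k+1))/(k+1).\<close>

lemma fls_residue_power_int_times_deriv:
  fixes A :: "complex fls"
  assumes "A \<noteq> 0"
  shows "fls_residue (A powi k * fls_deriv A) = (if k = -1 then of_int (fls_subdegree A) else 0)"
proof (cases "k = -1")
  case True
  then have "A powi k = inverse A" by (simp add: power_int_minus)
  then show ?thesis using True fls_residue_deriv_times_inverse_eq_subdegree(2)[of A] by simp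
next
  case False
  have c: "(of_int (k+1) :: complex) \<noteq> 0" using False
    by (metis add.inverse_inverse add_eq_0_iff of_int_1 of_int_eq_iff of_int_minus of_int_0_eq_iff)
  have "fls_deriv (A powi (k+1)) = fls_const (of_int (k+1)) * (A powi k * fls_deriv A)"
    by (simp add: fls_deriv_power_int fls_of_int mult.assoc)
  then have "A powi k * fls_deriv A = fls_const (inverse (of_int (k+1))) * fls_deriv (A powi (k+1))"
    using c by (simp add: mult.assoc[symmetric] fls_const_mult_const[symmetric] del: of_int_add)
  then show ?thesis using False
    by (simp only: fls_residue_fls_const_times fls_residue_deriv) simp
qed

lemma fls_residue_sum: "fls_residue (\<Sum>i\<in>I. f i) = (\<Sum>i\<in>I. fls_residue (f i :: complex fls))"
  by (simp add: fls_nth_sum)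

lemma fls_residue_diff: "fls_residue (f - g) = fls_residue f - fls_residue (g :: complex fls)"
  by simp

lemma fls_residue_times_X_inv: "fls_residue (f * fls_X_inv) = (f :: complex fls) $$ 0"
  by (simp add: fls_X_inv_times_conv_shift)

lemma fls_residue_X_inv_times: "fls_residue (fls_X_inv * f) = (f :: complex fls) $$ 0"
  by (simp add: fls_X_inv_times_conv_shift)

lemma fls_times_nth_bounded:
  fixes f g :: "complex fls"
  assumes f: "\<forall>k<N1. f $$ k = 0" and g: "\<forall>k<N2. g $$ k = 0"
  shows "(f * g) $$ n = (\<Sum>i=N1..n-N2. f $$ i * g $$ (n-i))"
proof (cases "f = 0 \<or> g = 0")
  case True then show ?thesis by auto
next
  case False
  then have df: "N1 \<le> fls_subdegree f" and dg: "N2 \<le> fls_subdegree g"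
    using f g by (auto intro: fls_subdegree_geI)
  have "(f * g) $$ n = (\<Sum>i=fls_subdegree f..n - fls_subdegree g. f $$ i * g $$ (n - i))"
    by (rule fls_times_nth(2))
  also have "\<dots> = (\<Sum>i=N1..n-N2. f $$ i * g $$ (n-i))"
    by (rule sum.mono_neutral_left) (use df dg in auto)
  finally show ?thesis .
qed

lemma fls_times_nth_finite_support:
  fixes f g :: "complex fls"
  assumes f1: "\<forall>k<L. f $$ k = 0" and f2: "\<forall>k>M. f $$ k = 0" and g: "\<forall>k<N. g $$ k = 0"
  shows "(f * g) $$ n = (\<Sum>i=L..M. f $$ i * g $$ (n-i))"
proof -
  have "(f * g) $$ n = (\<Sum>i=L..n-N. f $$ i * g $$ (n-i))" by (rule fls_times_nth_bounded[OF f1 g])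
  also have "\<dots> = (\<Sum>i=L..min M (n-N). f $$ i * g $$ (n-i))"
    by (rule sum.mono_neutral_right) (use f2 in auto)
  also have "\<dots> = (\<Sum>i=L..M. f $$ i * g $$ (n-i))"
    by (rule sum.mono_neutral_left) (use g in auto)
  finally show ?thesis .
qed

definition fls_vanishes_below :: "complex fls \<Rightarrow> int \<Rightarrow> bool" where
  "fls_vanishes_below f N \<longleftrightarrow> (\<forall>k<N. f $$ k = 0)"

lemma fls_vanishes_below_mult:
  "fls_vanishes_below f N1 \<Longrightarrow> fls_vanishes_below g N2 \<Longrightarrow> fls_vanishes_below (f * g) (N1 + N2)"
  unfolding fls_vanishes_below_def using fls_times_nth_bounded[of N1 f N2 g] by auto

lemma fls_vanishes_below_mono: "fls_vanishes_below f N \<Longrightarrow> M \<le> N \<Longrightarrow> fls_vanishes_below f M"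
  unfolding fls_vanishes_below_def by auto

lemma fls_vanishes_below_diff:
  "fls_vanishes_below f N \<Longrightarrow> fls_vanishes_below g N \<Longrightarrow> fls_vanishes_below (f - g) N"
  unfolding fls_vanishes_below_def by auto

lemma fls_vanishes_below_deriv: "fls_vanishes_below f N \<Longrightarrow> fls_vanishes_below (fls_deriv f) (N - 1)"
  unfolding fls_vanishes_below_def by simp

lemma fls_vanishes_below_subdegree: "fls_vanishes_below f (fls_subdegree f)"
  unfolding fls_vanishes_below_def by simp

lemma fls_vanishes_below_fps_to_fls: "fls_vanishes_below (fps_to_fls f) 0"
  unfolding fls_vanishes_below_def by simp

lemma fls_vanishes_below_compose_fps:
  assumes "fls_vanishes_below T N" "fps_nth H 0 = 0" "subdegree H = 1"
  shows "fls_vanishes_below (fls_compose_fps T H) N"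
proof (cases "T = 0")
  case True then show ?thesis by (simp add: fls_vanishes_below_def)
next
  case False
  then have "N \<le> fls_subdegree T" using assms(1) unfolding fls_vanishes_below_def by (intro fls_subdegree_geI) auto
  then show ?thesis
    using assms fls_vanishes_below_subdegree[of "fls_compose_fps T H"] fls_vanishes_below_mono by simp
qed

lemma fls_residue_eq_0_if_vanishes_below: "fls_vanishes_below f 0 \<Longrightarrow> fls_residue f = 0"
  unfolding fls_vanishes_below_def by simp

definition fls_vanishes_above :: "complex fls \<Rightarrow> int \<Rightarrow> bool" where
  "fls_vanishes_above f M \<longleftrightarrow> (\<forall>n>M. f $$ n = 0)"

lemma fls_vanishes_above_mono: "fls_vanishes_above f M \<Longrightarrow> M \<le> M' \<Longrightarrow> fls_vanishes_above f M'"
  unfolding fls_vanishes_above_def by auto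

lemma fls_vanishes_above_add:
  "fls_vanishes_above f M \<Longrightarrow> fls_vanishes_above g M \<Longrightarrow> fls_vanishes_above (f + g) M"
  unfolding fls_vanishes_above_def by auto

lemma fls_vanishes_above_uminus: "fls_vanishes_above f M \<Longrightarrow> fls_vanishes_above (- f) M"
  unfolding fls_vanishes_above_def by auto

lemma fls_vanishes_above_diff:
  "fls_vanishes_above f M \<Longrightarrow> fls_vanishes_above g M \<Longrightarrow> fls_vanishes_above (f - g) M"
  unfolding fls_vanishes_above_def by auto

lemma fls_vanishes_above_mult:
  assumes f: "fls_vanishes_above f M1" and g: "fls_vanishes_above g M2"
  shows "fls_vanishes_above (f * g) (M1 + M2)"
  unfolding fls_vanishes_above_def
proof safe
  fix n assume "n > M1 + M2"
  obtain L1 where "\<forall>n<L1. f $$ n = 0" by (elim fls_nth_vanishes_belowE)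
  moreover obtain L2 where "\<forall>n<L2. g $$ n = 0" by (elim fls_nth_vanishes_belowE)
  ultimately have "(f * g) $$ n = (\<Sum>i=L1..M1. f $$ i * g $$ (n-i))"
    using f unfolding fls_vanishes_above_def by (intro fls_times_nth_finite_support) auto
  also have "\<dots> = 0" using g \<open>n > M1 + M2\<close> unfolding fls_vanishes_above_def by (intro sum.neutral) auto
  finally show "(f * g) $$ n = 0" .
qed

lemma fls_vanishes_above_deriv: "fls_vanishes_above f M \<Longrightarrow> fls_vanishes_above (fls_deriv f) (M - 1)"
  unfolding fls_vanishes_above_def by simp

lemma fls_vanishes_above_integral:
  "fls_vanishes_above f M \<Longrightarrow> fls_vanishes_above (fls_integral f) (M + 1)"
  unfolding fls_vanishes_above_def by simp

lemma fls_vanishes_above_const: "fls_vanishes_above (fls_const c) 0"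
  unfolding fls_vanishes_above_def by simp

lemma fls_vanishes_above_X_inv: "fls_vanishes_above fls_X_inv (-1)"
  unfolding fls_vanishes_above_def by simp

section \<open>Laurent polynomials and the reflection x \<mapsto> 1/x\<close>

definition laurent_poly :: "complex fls \<Rightarrow> bool" where
  "laurent_poly f \<longleftrightarrow> (\<exists>M. fls_vanishes_above f M)"

lemma laurent_polyI: "fls_vanishes_above f M \<Longrightarrow> laurent_poly f"
  unfolding laurent_poly_def by blast

lemma laurent_poly_add: "laurent_poly f \<Longrightarrow> laurent_poly g \<Longrightarrow> laurent_poly (f + g)"
  unfolding laurent_poly_def
  by (meson fls_vanishes_above_add fls_vanishes_above_mono max.cobounded1 max.cobounded2)

lemma laurent_poly_uminus: "laurent_poly f \<Longrightarrow> laurent_poly (- f)"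
  unfolding laurent_poly_def using fls_vanishes_above_uminus by blast

lemma laurent_poly_diff: "laurent_poly f \<Longrightarrow> laurent_poly g \<Longrightarrow> laurent_poly (f - g)"
  using laurent_poly_add[of f "- g"] laurent_poly_uminus[of g] by simp

lemma laurent_poly_mult: "laurent_poly f \<Longrightarrow> laurent_poly g \<Longrightarrow> laurent_poly (f * g)"
  unfolding laurent_poly_def using fls_vanishes_above_mult by blast

lemma laurent_poly_const: "laurent_poly (fls_const c)"
  using laurent_polyI[OF fls_vanishes_above_const] .

lemma laurent_poly_X_inv: "laurent_poly fls_X_inv"
  using laurent_polyI[OF fls_vanishes_above_X_inv] .

lemma laurent_poly_power: "laurent_poly f \<Longrightarrow> laurent_poly (f ^ n)"
  by (induction n) (auto simp: laurent_poly_mult laurent_poly_const[of 1, simplified])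

lemma laurent_poly_sum: "(\<And>i. i \<in> A \<Longrightarrow> laurent_poly (f i)) \<Longrightarrow> laurent_poly (\<Sum>i\<in>A. f i)"
  by (induction A rule: infinite_finite_induct)
     (auto simp: laurent_poly_add laurent_poly_const[of 0, simplified])

lemma laurent_poly_deriv: "laurent_poly f \<Longrightarrow> laurent_poly (fls_deriv f)"
  unfolding laurent_poly_def using fls_vanishes_above_deriv by blast

lemma laurent_poly_integral: "laurent_poly f \<Longrightarrow> laurent_poly (fls_integral f)"
  unfolding laurent_poly_def using fls_vanishes_above_integral by blast

definition fls_reflect :: "complex fls \<Rightarrow> complex fls" where
  "fls_reflect f = Abs_fls (\<lambda>n. f $$ (-n))"

lemma fls_reflect_nth: "laurent_poly f \<Longrightarrow> fls_reflect f $$ n = f $$ (-n)"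
  unfolding fls_reflect_def laurent_poly_def fls_vanishes_above_def
proof -
  assume "\<exists>M. \<forall>n>M. f $$ n = 0"
  then obtain M where "\<forall>n>M. f $$ n = 0" by blast
  then have "\<forall>n< -M. f $$ (-n) = 0" by auto
  then show "Abs_fls (\<lambda>n. f $$ (- n)) $$ n = f $$ (- n)" by (rule nth_Abs_fls_lower_bound)
qed

lemma fls_reflect_nth_0: "laurent_poly f \<Longrightarrow> fls_reflect f $$ 0 = f $$ 0"
  by (simp add: fls_reflect_nth)

lemma laurent_poly_reflect: "laurent_poly f \<Longrightarrow> laurent_poly (fls_reflect f)"
proof -
  assume f: "laurent_poly f"
  obtain N where "\<forall>n<N. f $$ n = 0" by (elim fls_nth_vanishes_belowE)
  then have "fls_vanishes_above (fls_reflect f) (-N)"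
    unfolding fls_vanishes_above_def using fls_reflect_nth[OF f] by auto
  then show ?thesis by (rule laurent_polyI)
qed

lemma fls_reflect_reflect: "laurent_poly f \<Longrightarrow> fls_reflect (fls_reflect f) = f"
  by (intro fls_eqI) (simp add: fls_reflect_nth laurent_poly_reflect)

lemma fls_reflect_add:
  "laurent_poly f \<Longrightarrow> laurent_poly g \<Longrightarrow> fls_reflect (f + g) = fls_reflect f + fls_reflect g"
  by (intro fls_eqI) (simp add: fls_reflect_nth laurent_poly_add)

lemma fls_reflect_diff:
  "laurent_poly f \<Longrightarrow> laurent_poly g \<Longrightarrow> fls_reflect (f - g) = fls_reflect f - fls_reflect g"
  by (intro fls_eqI) (simp add: fls_reflect_nth laurent_poly_diff)

lemma fls_reflect_const: "fls_reflect (fls_const c) = fls_const c"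
  by (intro fls_eqI) (simp add: fls_reflect_nth laurent_poly_const)

lemma fls_reflect_X_inv: "fls_reflect fls_X_inv = fls_X"
  by (intro fls_eqI) (simp add: fls_reflect_nth laurent_poly_X_inv)

lemma fls_reflect_mult:
  assumes f: "laurent_poly f" and g: "laurent_poly g"
  shows "fls_reflect (f * g) = fls_reflect f * fls_reflect g"
proof (intro fls_eqI)
  fix n
  obtain M1 M2 where m: "\<forall>n>M1. f $$ n = 0" "\<forall>n>M2. g $$ n = 0"
    using f g unfolding laurent_poly_def fls_vanishes_above_def by blast
  obtain L1 where l1: "\<forall>n<L1. f $$ n = 0" by (elim fls_nth_vanishes_belowE)
  obtain L2 where l2: "\<forall>n<L2. g $$ n = 0" by (elim fls_nth_vanishes_belowE)
  have refl: "\<forall>k< -M1. fls_reflect f $$ k = 0" "\<forall>k> -L1. fls_reflect f $$ k = 0"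
    "\<forall>k< -M2. fls_reflect g $$ k = 0"
    using m l1 by (auto simp: fls_reflect_nth f g)
  have "fls_reflect (f * g) $$ n = (\<Sum>i=L1..M1. f $$ i * g $$ (-n-i))"
    by (simp add: fls_reflect_nth laurent_poly_mult f g fls_times_nth_finite_support[OF l1 m(1) l2])
  also have "\<dots> = (\<Sum>i\<in>uminus ` {-M1..-L1}. f $$ i * g $$ (-n-i))"
  proof -
    have "uminus ` {-M1..-L1} = {L1..M1}"
      by (auto simp: image_iff intro!: bexI[where x="- _"])
    then show ?thesis by simp
  qed
  also have "\<dots> = (\<Sum>i=-M1..-L1. f $$ (-i) * g $$ (-n+i))"
    by (subst sum.reindex) (auto simp: inj_on_def)
  also have "\<dots> = (fls_reflect f * fls_reflect g) $$ n"
    by (simp add: fls_times_nth_finite_support[OF refl] fls_reflect_nth f g)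
  finally show "fls_reflect (f * g) $$ n = (fls_reflect f * fls_reflect g) $$ n" .
qed

lemma fls_reflect_power: "laurent_poly f \<Longrightarrow> fls_reflect (f ^ n) = fls_reflect f ^ n"
  by (induction n) (auto simp: fls_reflect_mult laurent_poly_power fls_reflect_const[of 1, simplified])

lemma fls_reflect_sum:
  "finite A \<Longrightarrow> (\<And>i. i \<in> A \<Longrightarrow> laurent_poly (f i)) \<Longrightarrow>
     fls_reflect (\<Sum>i\<in>A. f i) = (\<Sum>i\<in>A. fls_reflect (f i))"
  by (induction A rule: finite_induct)
     (auto simp: fls_reflect_add laurent_poly_sum fls_reflect_const[of 0, simplified])

lemma fls_deriv_reflect:
  assumes f: "laurent_poly f"
  shows "fls_deriv (fls_reflect f) = - (fls_X_inv ^ 2 * fls_reflect (fls_deriv f))"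
proof (intro fls_eqI)
  fix n :: int
  have "(fls_X_inv ^ 2 * fls_reflect (fls_deriv f)) $$ n = fls_reflect (fls_deriv f) $$ (n + 2)"
    by (simp add: fls_X_inv_power_times_conv_shift)
  also have "\<dots> = - of_int (n + 1) * f $$ (- (n + 1))"
    by (simp add: fls_reflect_nth f laurent_poly_deriv algebra_simps)
  finally show "fls_deriv (fls_reflect f) $$ n = (- (fls_X_inv ^ 2 * fls_reflect (fls_deriv f))) $$ n"
    by (simp add: fls_reflect_nth f) (simp add: algebra_simps)
qed

lemma fls_X_inv_power_2_times_X: "fls_X_inv ^ 2 * fls_X = (fls_X_inv :: complex fls)"
  by (intro fls_eqI) (simp add: fls_X_inv_power_times_conv_shift)

lemma fls_X_inv_power_2_times_X_power_2: "fls_X_inv ^ 2 * fls_X ^ 2 = (1 :: complex fls)"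
  by (intro fls_eqI) (simp add: fls_X_inv_power_times_conv_shift)

lemma fls_reflect_deriv:
  "laurent_poly g \<Longrightarrow> fls_reflect (fls_deriv g) = - (fls_X ^ 2 * fls_deriv (fls_reflect g))"
  by (simp add: fls_deriv_reflect mult.assoc[symmetric] mult.commute[of "fls_X ^ 2"]
      fls_X_inv_power_2_times_X_power_2)

lemma fls_reflect_times_deriv:
  "laurent_poly f \<Longrightarrow> laurent_poly g \<Longrightarrow>
     fls_reflect (f * fls_deriv g) = - (fls_X ^ 2 * (fls_reflect f * fls_deriv (fls_reflect g)))"
  by (simp add: fls_reflect_mult laurent_poly_deriv fls_reflect_deriv algebra_simps)

text \<open>Reflection reverses the orientation of a small circle around the origin.\<close>

lemma fls_residue_reflect:
  assumes "laurent_poly h" "laurent_poly g"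
  shows "fls_residue (fls_reflect h * fls_deriv (fls_reflect g)) = - fls_residue (h * fls_deriv g)"
proof -
  have "fls_reflect h * fls_deriv (fls_reflect g) = - (fls_X_inv ^ 2 * fls_reflect (h * fls_deriv g))"
    by (simp add: fls_deriv_reflect assms fls_reflect_mult laurent_poly_deriv)
  then show ?thesis
    by (simp add: fls_X_inv_power_times_conv_shift fls_reflect_nth assms laurent_poly_deriv laurent_poly_mult)
qed

lemma fls_residue_reflect_times:
  "laurent_poly X \<Longrightarrow> laurent_poly f \<Longrightarrow> laurent_poly g \<Longrightarrow>
     fls_residue (fls_reflect X * (fls_reflect f * fls_deriv (fls_reflect g))) =
       - fls_residue (X * (f * fls_deriv g))"
  using fls_residue_reflect[of "X * f" g] by (simp add: fls_reflect_mult laurent_poly_mult mult.assoc)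

section \<open>Holomorphic families of Laurent series\<close>

text \<open>The support must be bounded below uniformly near s = 0, so that the coefficients of products
  are finite sums of a fixed length.\<close>

definition has_fls_derivative :: "(complex \<Rightarrow> complex fls) \<Rightarrow> complex fls \<Rightarrow> bool" where
  "has_fls_derivative f f' \<longleftrightarrow> (\<exists>N. eventually (\<lambda>s. \<forall>n<N. f s $$ n = 0) (nhds 0)) \<and>
     (\<forall>n. ((\<lambda>s. f s $$ n) has_field_derivative f' $$ n) (at 0))"

lemma has_fls_derivative_nthD:
  "has_fls_derivative f f' \<Longrightarrow> ((\<lambda>s. f s $$ n) has_field_derivative f' $$ n) (at 0)"
  unfolding has_fls_derivative_def by blast

lemma DERIV_eventually_0_imp_0:
  assumes "(g has_field_derivative D) (at 0)" "eventually (\<lambda>s. g s = 0) (nhds 0)"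
  shows "D = 0"
proof -
  have "((\<lambda>s. 0) has_field_derivative D) (at 0)"
    using assms DERIV_cong_ev[of 0 0 g "\<lambda>s. 0" D D] by simp
  then show ?thesis using DERIV_const DERIV_unique by blast
qed

lemma has_fls_derivative_vanishes_belowE:
  assumes "has_fls_derivative f f'"
  obtains N where "eventually (\<lambda>s. \<forall>n<N. f s $$ n = 0) (nhds 0)" "\<forall>n<N. f' $$ n = 0"
    "\<forall>n<N. f 0 $$ n = 0"
proof -
  from assms obtain N where ev: "eventually (\<lambda>s. \<forall>n<N. f s $$ n = 0) (nhds 0)"
    unfolding has_fls_derivative_def by blast
  have "f' $$ n = 0" if "n < N" for n
  proof -
    have "eventually (\<lambda>s. f s $$ n = 0) (nhds 0)" using ev by (rule eventually_mono) (use that in auto)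
    then show ?thesis using DERIV_eventually_0_imp_0[OF has_fls_derivative_nthD[OF assms]] by blast
  qed
  moreover have "\<forall>n<N. f 0 $$ n = 0" using eventually_nhds_x_imp_x[OF ev] .
  ultimately show ?thesis using that ev by blast
qed

lemma has_fls_derivative_vanishes_above:
  assumes "has_fls_derivative f f'" "eventually (\<lambda>s. fls_vanishes_above (f s) M) (nhds 0)"
  shows "fls_vanishes_above f' M"
  unfolding fls_vanishes_above_def
proof safe
  fix n assume "n > M"
  have "eventually (\<lambda>s. f s $$ n = 0) (nhds 0)"
    using assms(2) by (rule eventually_mono) (use \<open>n > M\<close> in \<open>auto simp: fls_vanishes_above_def\<close>)
  then show "f' $$ n = 0" using DERIV_eventually_0_imp_0[OF has_fls_derivative_nthD[OF assms(1)]] by blast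
qed

lemma has_fls_derivative_cong_ev:
  assumes "has_fls_derivative f f'" "eventually (\<lambda>s. f s = g s) (nhds 0)"
  shows "has_fls_derivative g f'"
proof -
  from assms(1) obtain N where ev: "eventually (\<lambda>s. \<forall>n<N. f s $$ n = 0) (nhds 0)"
    unfolding has_fls_derivative_def by blast
  have "eventually (\<lambda>s. \<forall>n<N. g s $$ n = 0) (nhds 0)"
    using eventually_conj[OF ev assms(2)] by (rule eventually_mono) auto
  moreover have "((\<lambda>s. g s $$ n) has_field_derivative f' $$ n) (at 0)" for n
  proof -
    have "eventually (\<lambda>s. f s $$ n = g s $$ n) (nhds 0)" using assms(2) by (rule eventually_mono) auto
    then show ?thesis
      using has_fls_derivative_nthD[OF assms(1), of n] DERIV_cong_ev[of 0 0 "\<lambda>s. f s $$ n" "\<lambda>s. g s $$ n"]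
      by auto
  qed
  ultimately show ?thesis unfolding has_fls_derivative_def by blast
qed

lemma has_fls_derivative_unique: "has_fls_derivative f f' \<Longrightarrow> has_fls_derivative f f'' \<Longrightarrow> f' = f''"
  by (intro fls_eqI) (meson DERIV_unique has_fls_derivative_nthD)

lemma has_fls_derivative_const: "has_fls_derivative (\<lambda>s. F) 0"
proof -
  obtain N where "\<forall>n<N. F $$ n = 0" by (elim fls_nth_vanishes_belowE)
  then show ?thesis unfolding has_fls_derivative_def by auto
qed

lemma has_fls_derivative_fls_const:
  "(a has_field_derivative a') (at 0) \<Longrightarrow> has_fls_derivative (\<lambda>s. fls_const (a s)) (fls_const a')"
  unfolding has_fls_derivative_def by (auto intro!: exI[of _ 0] simp: DERIV_const)

lemma has_fls_derivative_add:
  assumes "has_fls_derivative f f'" "has_fls_derivative g g'"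
  shows "has_fls_derivative (\<lambda>s. f s + g s) (f' + g')"
proof -
  from assms obtain N1 N2 where e1: "eventually (\<lambda>s. \<forall>n<N1. f s $$ n = 0) (nhds 0)"
    and e2: "eventually (\<lambda>s. \<forall>n<N2. g s $$ n = 0) (nhds 0)" unfolding has_fls_derivative_def by blast
  have "eventually (\<lambda>s. \<forall>n<min N1 N2. (f s + g s) $$ n = 0) (nhds 0)"
    using eventually_conj[OF e1 e2] by (rule eventually_mono) auto
  moreover have "((\<lambda>s. (f s + g s) $$ n) has_field_derivative (f' + g') $$ n) (at 0)" for n
    using DERIV_add[OF has_fls_derivative_nthD[OF assms(1)] has_fls_derivative_nthD[OF assms(2)]] by simp
  ultimately show ?thesis unfolding has_fls_derivative_def by blast
qed

lemma has_fls_derivative_uminus: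
  assumes "has_fls_derivative f f'"
  shows "has_fls_derivative (\<lambda>s. - f s) (- f')"
proof -
  from assms obtain N where "eventually (\<lambda>s. \<forall>n<N. f s $$ n = 0) (nhds 0)"
    unfolding has_fls_derivative_def by blast
  then have "eventually (\<lambda>s. \<forall>n<N. (- f s) $$ n = 0) (nhds 0)"
    by (rule eventually_mono) auto
  moreover have "((\<lambda>s. (- f s) $$ n) has_field_derivative (- f') $$ n) (at 0)" for n
    using DERIV_minus[OF has_fls_derivative_nthD[OF assms]] by simp
  ultimately show ?thesis unfolding has_fls_derivative_def by blast
qed

lemma has_fls_derivative_diff:
  "has_fls_derivative f f' \<Longrightarrow> has_fls_derivative g g' \<Longrightarrow> has_fls_derivative (\<lambda>s. f s - g s) (f' - g')"
  using has_fls_derivative_add[of f f' "\<lambda>s. - g s" "- g'"] has_fls_derivative_uminus[of g g'] by simp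

lemma has_fls_derivative_mult:
  assumes f: "has_fls_derivative f f'" and g: "has_fls_derivative g g'"
  shows "has_fls_derivative (\<lambda>s. f s * g s) (f' * g 0 + f 0 * g')"
proof -
  obtain N1 where e1: "eventually (\<lambda>s. \<forall>n<N1. f s $$ n = 0) (nhds 0)"
    and d1: "\<forall>n<N1. f' $$ n = 0" and z1: "\<forall>n<N1. f 0 $$ n = 0"
    using has_fls_derivative_vanishes_belowE[OF f] by blast
  obtain N2 where e2: "eventually (\<lambda>s. \<forall>n<N2. g s $$ n = 0) (nhds 0)"
    and d2: "\<forall>n<N2. g' $$ n = 0" and z2: "\<forall>n<N2. g 0 $$ n = 0"
    using has_fls_derivative_vanishes_belowE[OF g] by blast
  have ev: "eventually (\<lambda>s. \<forall>n. (f s * g s) $$ n = (\<Sum>i=N1..n-N2. f s $$ i * g s $$ (n-i))) (nhds 0)"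
    using eventually_conj[OF e1 e2] by (rule eventually_mono) (auto intro: fls_times_nth_bounded)
  have "eventually (\<lambda>s. \<forall>n<N1+N2. (f s * g s) $$ n = 0) (nhds 0)"
    using ev by (rule eventually_mono) auto
  moreover have "((\<lambda>s. (f s * g s) $$ n) has_field_derivative (f' * g 0 + f 0 * g') $$ n) (at 0)" for n
  proof -
    have D: "((\<lambda>s. (\<Sum>i=N1..n-N2. f s $$ i * g s $$ (n-i))) has_field_derivative
        (\<Sum>i=N1..n-N2. f' $$ i * g 0 $$ (n-i) + f 0 $$ i * g' $$ (n-i))) (at 0)"
    proof (intro DERIV_sum)
      fix i
      show "((\<lambda>s. f s $$ i * g s $$ (n-i)) has_field_derivative
          f' $$ i * g 0 $$ (n-i) + f 0 $$ i * g' $$ (n-i)) (at 0)"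
        using DERIV_mult[OF has_fls_derivative_nthD[OF f] has_fls_derivative_nthD[OF g], of i "n-i"]
        by (simp only: ac_simps)
    qed
    have E: "(\<Sum>i=N1..n-N2. f' $$ i * g 0 $$ (n-i) + f 0 $$ i * g' $$ (n-i)) = (f' * g 0 + f 0 * g') $$ n"
      using fls_times_nth_bounded[OF d1 z2, of n] fls_times_nth_bounded[OF z1 d2, of n]
      by (simp add: sum.distrib)
    have evn: "eventually (\<lambda>s. (f s * g s) $$ n = (\<Sum>i=N1..n-N2. f s $$ i * g s $$ (n-i))) (nhds 0)"
      using ev by (rule eventually_mono) blast
    show ?thesis using DERIV_cong_ev[OF refl evn refl] D E by simp
  qed
  ultimately show ?thesis unfolding has_fls_derivative_def by blast
qed

lemma has_fls_derivative_deriv: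
  assumes "has_fls_derivative f f'"
  shows "has_fls_derivative (\<lambda>s. fls_deriv (f s)) (fls_deriv f')"
proof -
  from assms obtain N where "eventually (\<lambda>s. \<forall>n<N. f s $$ n = 0) (nhds 0)"
    unfolding has_fls_derivative_def by blast
  then have "eventually (\<lambda>s. \<forall>n<N - 1. fls_deriv (f s) $$ n = 0) (nhds 0)"
    by (rule eventually_mono) auto
  moreover have "((\<lambda>s. fls_deriv (f s) $$ n) has_field_derivative fls_deriv f' $$ n) (at 0)" for n
    using DERIV_cmult[OF has_fls_derivative_nthD[OF assms, of "n+1"], of "of_int (n+1)"] by simp
  ultimately show ?thesis unfolding has_fls_derivative_def by blast
qed

lemma has_fls_derivative_integral:
  assumes "has_fls_derivative f f'"
  shows "has_fls_derivative (\<lambda>s. fls_integral (f s)) (fls_integral f')"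
proof -
  from assms obtain N where "eventually (\<lambda>s. \<forall>n<N. f s $$ n = 0) (nhds 0)"
    unfolding has_fls_derivative_def by blast
  then have "eventually (\<lambda>s. \<forall>n<min N 0. fls_integral (f s) $$ n = 0) (nhds 0)"
    by (rule eventually_mono) auto
  moreover have "((\<lambda>s. fls_integral (f s) $$ n) has_field_derivative fls_integral f' $$ n) (at 0)" for n
    using DERIV_cmult[OF has_fls_derivative_nthD[OF assms, of "n-1"], of "inverse (of_int n)"] by simp
  ultimately show ?thesis unfolding has_fls_derivative_def by blast
qed

lemma has_fls_derivative_power:
  "has_fls_derivative f f' \<Longrightarrow> has_fls_derivative (\<lambda>s. f s ^ k) (of_nat k * f 0 ^ (k - 1) * f')"
proof (induction k)
  case 0 then show ?case using has_fls_derivative_const[of 1] by simp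
next
  case (Suc k)
  have "has_fls_derivative (\<lambda>s. f s * f s ^ k) (f' * f 0 ^ k + f 0 * (of_nat k * f 0 ^ (k - 1) * f'))"
    using has_fls_derivative_mult[OF Suc.prems Suc.IH[OF Suc.prems]] by simp
  moreover have "f' * f 0 ^ k + f 0 * (of_nat k * f 0 ^ (k - 1) * f') = of_nat (Suc k) * f 0 ^ (Suc k - 1) * f'"
    by (cases k) (simp_all add: algebra_simps)
  ultimately show ?case by simp
qed

lemma has_fls_derivative_residue:
  "has_fls_derivative f f' \<Longrightarrow> ((\<lambda>s. fls_residue (f s)) has_field_derivative fls_residue f') (at 0)"
  by (simp add: has_fls_derivative_nthD)

lemma has_fls_derivative_reflect:
  assumes f: "has_fls_derivative f f'" and ev: "eventually (\<lambda>s. fls_vanishes_above (f s) M) (nhds 0)"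
  shows "has_fls_derivative (\<lambda>s. fls_reflect (f s)) (fls_reflect f')"
proof -
  have f': "laurent_poly f'" by (rule laurent_polyI[OF has_fls_derivative_vanishes_above[OF f ev]])
  have "eventually (\<lambda>s. \<forall>n< -M. fls_reflect (f s) $$ n = 0) (nhds 0)"
    using ev by (rule eventually_mono) (auto simp: fls_vanishes_above_def fls_reflect_nth laurent_polyI)
  moreover have "((\<lambda>s. fls_reflect (f s) $$ n) has_field_derivative fls_reflect f' $$ n) (at 0)" for n
  proof -
    have "eventually (\<lambda>s. fls_reflect (f s) $$ n = f s $$ (-n)) (nhds 0)"
      using ev by (rule eventually_mono) (auto simp: fls_reflect_nth laurent_polyI)
    moreover have "((\<lambda>s. f s $$ (-n)) has_field_derivative fls_reflect f' $$ n) (at 0)"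
      using has_fls_derivative_nthD[OF f, of "-n"] by (simp add: fls_reflect_nth f')
    ultimately show ?thesis
      using DERIV_cong_ev[of 0 0 "\<lambda>s. fls_reflect (f s) $$ n" "\<lambda>s. f s $$ (-n)"] by simp
  qed
  ultimately show ?thesis unfolding has_fls_derivative_def by blast
qed

lemma eventually_nonzero_if_DERIV:
  assumes "(c has_field_derivative D) (at 0)" "c 0 \<noteq> 0"
  shows "eventually (\<lambda>s. c s \<noteq> 0) (nhds 0)"
proof -
  have "(c \<longlongrightarrow> c 0) (at 0)" using DERIV_isCont[OF assms(1)] by (simp add: isCont_def)
  then have "eventually (\<lambda>s. c s \<noteq> 0) (at 0)" using assms(2) tendsto_imp_eventually_ne by blast
  then show ?thesis using assms(2) eventually_nhds_conv_at by blast
qed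

lemma field_differentiable_cong_ev:
  assumes "f field_differentiable (at 0)" "eventually (\<lambda>s. f s = g s) (nhds 0)"
  shows "g field_differentiable (at 0)"
  using assms DERIV_cong_ev[of 0 0 f g] unfolding field_differentiable_def by blast

text \<open>The coefficients of 1/f are determined recursively from f * (1/f) = 1, each one by
  finitely many earlier ones and the leading coefficient f_m of f.\<close>

lemma field_differentiable_nth_inverse:
  assumes f: "has_fls_derivative f f'" and ev: "eventually (\<lambda>s. \<forall>n<m. f s $$ n = 0) (nhds 0)"
    and nz: "f 0 $$ m \<noteq> 0"
  shows "(\<lambda>s. inverse (f s) $$ (int k - m)) field_differentiable (at 0)"
proof (induction k rule: less_induct)
  case (less k)
  define g where "g s = inverse (f s)" for s
  define R where "R s = ((if k = 0 then 1 else 0) - (\<Sum>i\<in>{m+1..int k+m}. f s $$ i * g s $$ (int k - i)))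
    / f s $$ m" for s
  have evm: "eventually (\<lambda>s. f s $$ m \<noteq> 0) (nhds 0)"
    using eventually_nonzero_if_DERIV[OF has_fls_derivative_nthD[OF f] nz] .
  have "eventually (\<lambda>s. R s = g s $$ (int k - m)) (nhds 0)"
    using eventually_conj[OF ev evm]
  proof (rule eventually_mono)
    fix s assume h: "(\<forall>n<m. f s $$ n = 0) \<and> f s $$ m \<noteq> 0"
    then have sub: "fls_subdegree (f s) = m" and "f s \<noteq> 0" by (auto intro: fls_subdegree_eqI)
    then have fg: "f s * g s = 1" and "\<forall>n< -m. g s $$ n = 0" by (auto simp: g_def)
    then have "(f s * g s) $$ int k = (\<Sum>i=m..int k - -m. f s $$ i * g s $$ (int k - i))"
      using h by (intro fls_times_nth_bounded) auto
    also have "{m..int k - -m} = insert m {m+1..int k+m}" by auto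
    finally have "(if k = 0 then 1 else 0) =
        f s $$ m * g s $$ (int k - m) + (\<Sum>i\<in>{m+1..int k+m}. f s $$ i * g s $$ (int k - i))"
      using fg by simp
    then have "R s = (f s $$ m * g s $$ (int k - m)) / f s $$ m"
      unfolding R_def by (simp add: algebra_simps)
    then show "R s = g s $$ (int k - m)" using h by simp
  qed
  moreover have "R field_differentiable (at 0)"
    unfolding R_def
  proof (intro field_differentiable_divide field_differentiable_diff field_differentiable_sum
      field_differentiable_mult)
    show "(\<lambda>s. if k = 0 then 1 else 0) field_differentiable at 0" by simp
    show "(\<lambda>s. f s $$ m) field_differentiable at 0"
      using has_fls_derivative_nthD[OF f] field_differentiable_def by blast
    show "f 0 $$ m \<noteq> 0" by (rule nz)
    fix i assume i: "i \<in> {m+1..int k+m}"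
    show "(\<lambda>s. f s $$ i) field_differentiable at 0"
      using has_fls_derivative_nthD[OF f] field_differentiable_def by blast
    have "nat (int k + m - i) < k" "int (nat (int k + m - i)) - m = int k - i" using i by auto
    then show "(\<lambda>s. g s $$ (int k - i)) field_differentiable at 0"
      using less[of "nat (int k + m - i)"] by (simp add: g_def)
  qed
  ultimately show ?case unfolding g_def by (rule field_differentiable_cong_ev[rotated])
qed

lemma has_fls_derivative_inverse_ex:
  assumes f: "has_fls_derivative f f'" and ev: "eventually (\<lambda>s. \<forall>n<m. f s $$ n = 0) (nhds 0)"
    and nz: "f 0 $$ m \<noteq> 0"
  shows "\<exists>g'. has_fls_derivative (\<lambda>s. inverse (f s)) g'"
proof -
  define g where "g s = inverse (f s)" for s
  have evm: "eventually (\<lambda>s. f s $$ m \<noteq> 0) (nhds 0)"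
    using eventually_nonzero_if_DERIV[OF has_fls_derivative_nthD[OF f] nz] .
  have "eventually (\<lambda>s. f s \<noteq> 0 \<and> fls_subdegree (f s) = m) (nhds 0)"
    using eventually_conj[OF ev evm] by (rule eventually_mono) (auto intro: fls_subdegree_eqI)
  then have evg: "eventually (\<lambda>s. \<forall>n< -m. g s $$ n = 0) (nhds 0)"
    by (rule eventually_mono) (auto simp: g_def)
  have low: "((\<lambda>s. g s $$ n) has_field_derivative 0) (at 0)" if "n < -m" for n
  proof -
    have "eventually (\<lambda>s. g s $$ n = 0) (nhds 0)" using evg by (rule eventually_mono) (use that in auto)
    then show ?thesis using DERIV_cong_ev[of 0 0 "\<lambda>s. g s $$ n" "\<lambda>s. 0" 0 0] by simp
  qed
  define g' where "g' = Abs_fls (\<lambda>n. deriv (\<lambda>s. g s $$ n) 0)"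
  have g'n: "g' $$ n = deriv (\<lambda>s. g s $$ n) 0" for n
    unfolding g'_def by (rule nth_Abs_fls_lower_bound[of "-m"]) (use low DERIV_imp_deriv in blast)
  have "((\<lambda>s. g s $$ n) has_field_derivative g' $$ n) (at 0)" for n
  proof (cases "n < -m")
    case True
    then have "g' $$ n = 0" using g'n DERIV_imp_deriv[OF low[OF True]] by simp
    then show ?thesis using low[OF True] by simp
  next
    case False
    then have "int (nat (n + m)) - m = n" by simp
    then have "(\<lambda>s. g s $$ n) field_differentiable (at 0)"
      using field_differentiable_nth_inverse[OF f ev nz, of "nat (n + m)"] by (simp add: g_def)
    then show ?thesis unfolding g'n using DERIV_deriv_iff_field_differentiable by blast
  qed
  then have "has_fls_derivative g g'" using evg unfolding has_fls_derivative_def by blast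
  then show ?thesis unfolding g_def by blast
qed

lemma has_fls_derivative_inverse:
  assumes f: "has_fls_derivative f f'" and ev: "eventually (\<lambda>s. \<forall>n<m. f s $$ n = 0) (nhds 0)"
    and nz: "f 0 $$ m \<noteq> 0"
  shows "has_fls_derivative (\<lambda>s. inverse (f s)) (- f' * inverse (f 0) ^ 2)"
proof -
  obtain g' where g: "has_fls_derivative (\<lambda>s. inverse (f s)) g'"
    using has_fls_derivative_inverse_ex[OF assms] by blast
  have "eventually (\<lambda>s. f s \<noteq> 0) (nhds 0)"
    using eventually_nonzero_if_DERIV[OF has_fls_derivative_nthD[OF f] nz] by (rule eventually_mono) auto
  then have "eventually (\<lambda>s. f s * inverse (f s) = 1) (nhds 0)" by (rule eventually_mono) simp
  then have "has_fls_derivative (\<lambda>s. 1) (f' * inverse (f 0) + f 0 * g')"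
    by (rule has_fls_derivative_cong_ev[OF has_fls_derivative_mult[OF f g]])
  then have "f' * inverse (f 0) + f 0 * g' = 0"
    using has_fls_derivative_unique[OF _ has_fls_derivative_const[of 1]] by simp
  then have "f 0 * g' = - (f' * inverse (f 0))" by (simp add: eq_neg_iff_add_eq_0 add.commute)
  moreover have "f 0 \<noteq> 0" using nz by auto
  then have "g' = inverse (f 0) * (f 0 * g')" by (simp add: mult.assoc[symmetric])
  ultimately have "g' = - f' * inverse (f 0) ^ 2" by (simp add: power2_eq_square)
  then show ?thesis using g by simp
qed

text \<open>The hypothesis compat says that P is a function of A; an integration by parts then moves all
  variations into \<Omega> = \<delta>B dA - \<delta>A dB.\<close>

lemma has_field_derivative_residue_pairing:
  assumes fA: "has_fls_derivative A dA" and fB: "has_fls_derivative B dB" and fP: "has_fls_derivative P dP"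
    and compat: "dP * fls_deriv (A 0) = fls_deriv (P 0) * dA"
  shows "((\<lambda>s. fls_residue (B s * P s * fls_deriv (A s))) has_field_derivative
     fls_residue (P 0 * (dB * fls_deriv (A 0) - dA * fls_deriv (B 0)))) (at 0)"
proof -
  have "has_fls_derivative (\<lambda>s. B s * P s * fls_deriv (A s))
      ((dB * P 0 + B 0 * dP) * fls_deriv (A 0) + (B 0 * P 0) * fls_deriv dA)"
    using has_fls_derivative_mult[OF has_fls_derivative_mult[OF fB fP] has_fls_derivative_deriv[OF fA]]
    by simp
  moreover have "(dB * P 0 + B 0 * dP) * fls_deriv (A 0) + (B 0 * P 0) * fls_deriv dA =
      P 0 * (dB * fls_deriv (A 0) - dA * fls_deriv (B 0)) + fls_deriv (B 0 * P 0 * dA)"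
  proof -
    have "(dB * P 0 + B 0 * dP) * fls_deriv (A 0) + (B 0 * P 0) * fls_deriv dA =
        dB * P 0 * fls_deriv (A 0) + B 0 * (dP * fls_deriv (A 0)) + B 0 * P 0 * fls_deriv dA"
      by (simp add: algebra_simps)
    then show ?thesis unfolding compat by (simp add: algebra_simps)
  qed
  ultimately have "((\<lambda>s. fls_residue (B s * P s * fls_deriv (A s))) has_field_derivative
      fls_residue (P 0 * (dB * fls_deriv (A 0) - dA * fls_deriv (B 0)) + fls_deriv (B 0 * P 0 * dA))) (at 0)"
    using has_fls_derivative_residue by metis
  then show ?thesis by (simp only: fls_residue_add fls_residue_deriv) simp
qed

lemma has_field_derivative_residue_square_pairing:
  assumes fA: "has_fls_derivative A dA" and fB: "has_fls_derivative B dB"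
  shows "((\<lambda>s. fls_residue (B s ^ 2 * A s * fls_deriv (A s)) / 2) has_field_derivative
     fls_residue (B 0 * A 0 * (dB * fls_deriv (A 0) - dA * fls_deriv (B 0)))) (at 0)"
proof -
  define \<Omega> where "\<Omega> = dB * fls_deriv (A 0) - dA * fls_deriv (B 0)"
  have "has_fls_derivative (\<lambda>s. B s * B s * A s * fls_deriv (A s))
     (((dB * B 0 + B 0 * dB) * A 0 + (B 0 * B 0) * dA) * fls_deriv (A 0) + (B 0 * B 0 * A 0) * fls_deriv dA)"
    using has_fls_derivative_mult[OF has_fls_derivative_mult[OF has_fls_derivative_mult[OF fB fB] fA]
        has_fls_derivative_deriv[OF fA]] by simp
  also have "((dB * B 0 + B 0 * dB) * A 0 + (B 0 * B 0) * dA) * fls_deriv (A 0) + (B 0 * B 0 * A 0) * fls_deriv dA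
      = fls_const 2 * (B 0 * A 0 * \<Omega>) + fls_deriv (B 0 * B 0 * A 0 * dA)"
    unfolding \<Omega>_def by (simp add: algebra_simps flip: fls_const_numeral)
  finally have "((\<lambda>s. fls_residue (B s * B s * A s * fls_deriv (A s))) has_field_derivative
      2 * fls_residue (B 0 * A 0 * \<Omega>)) (at 0)"
    by (auto dest!: has_fls_derivative_residue simp only: fls_residue_add fls_residue_deriv
        fls_residue_fls_const_times add_0_right)
  from DERIV_cdivide[OF this, of 2] show ?thesis unfolding \<Omega>_def by (simp add: power2_eq_square)
qed

section \<open>The local expansions of P and Q\<close>

lemma big_nth: "big \<gamma> a d $$ n = (if n = -1 then \<gamma> else if 0 \<le> n \<and> n \<le> int d then a (nat n) else 0)"
proof -
  have "(\<Sum>j\<le>d. fls_const (a j) * fls_X ^ j) $$ n = (\<Sum>j\<le>d. if n = int j then a j else 0)"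
    by (simp add: fls_nth_sum if_distrib cong: if_cong)
  also have "\<dots> = (if 0 \<le> n \<and> n \<le> int d then a (nat n) else 0)"
  proof (cases "0 \<le> n \<and> n \<le> int d")
    case True
    then have "(\<Sum>j\<le>d. if n = int j then a j else 0) = (\<Sum>j\<in>{nat n}. if n = int j then a j else 0)"
      by (intro sum.mono_neutral_right) auto
    then show ?thesis using True by simp
  qed (auto intro: sum.neutral)
  finally show ?thesis unfolding big_def by simp
qed

lemma small_nth: "small \<gamma> b e $$ n = (if n = 1 then \<gamma> else if - int e \<le> n \<and> n \<le> 0 then b (nat (-n)) else 0)"
proof -
  have "(\<Sum>j\<le>e. fls_const (b j) * fls_X_inv ^ j) $$ n = (\<Sum>j\<le>e. if n = - int j then b j else 0)"
    by (simp add: fls_nth_sum if_distrib cong: if_cong)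
  also have "\<dots> = (if - int e \<le> n \<and> n \<le> 0 then b (nat (-n)) else 0)"
  proof (cases "- int e \<le> n \<and> n \<le> 0")
    case True
    then have "(\<Sum>j\<le>e. if n = - int j then b j else 0) = (\<Sum>j\<in>{nat (-n)}. if n = - int j then b j else 0)"
      by (intro sum.mono_neutral_right) auto
    then show ?thesis using True by simp
  qed (auto intro: sum.neutral)
  finally show ?thesis unfolding small_def by simp
qed

lemma big_cong: "(\<forall>j\<le>d. a j = a' j) \<Longrightarrow> big \<gamma> a d = big \<gamma> a' d"
  unfolding big_def by simp

lemma small_cong: "(\<forall>j\<le>d. a j = a' j) \<Longrightarrow> small \<gamma> a d = small \<gamma> a' d"
  unfolding small_def by simp

lemma big_nonzero: "\<gamma> \<noteq> 0 \<Longrightarrow> big \<gamma> a d \<noteq> 0"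
  by (metis big_nth fls_zero_nth)

lemma fls_subdegree_big: "\<gamma> \<noteq> 0 \<Longrightarrow> fls_subdegree (big \<gamma> a d) = -1"
  by (intro fls_subdegree_eqI) (auto simp: big_nth)

lemma fls_vanishes_below_big: "fls_vanishes_below (big \<gamma> a d) (-1)"
  unfolding fls_vanishes_below_def by (simp add: big_nth)

lemma fls_vanishes_below_small: "fls_vanishes_below (small \<gamma> b e) (- int e)"
  unfolding fls_vanishes_below_def by (simp add: small_nth)

lemma fls_vanishes_above_big: "fls_vanishes_above (big \<gamma> a d) (int d)"
  unfolding fls_vanishes_above_def by (simp add: big_nth)

lemma fls_vanishes_above_small: "fls_vanishes_above (small \<gamma> a d) 1"
  unfolding fls_vanishes_above_def by (simp add: small_nth)

lemma laurent_poly_big: "laurent_poly (big \<gamma> a d)"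
  using laurent_polyI[OF fls_vanishes_above_big] .

lemma laurent_poly_small: "laurent_poly (small \<gamma> a d)"
  using laurent_polyI[OF fls_vanishes_above_small] .

lemma fls_reflect_big: "fls_reflect (big \<gamma> a d) = small \<gamma> a d"
  by (intro fls_eqI) (auto simp: fls_reflect_nth laurent_poly_big big_nth small_nth)

lemma fls_reflect_small: "fls_reflect (small \<gamma> a d) = big \<gamma> a d"
  by (metis fls_reflect_big fls_reflect_reflect laurent_poly_big)

lemma has_fls_derivative_big:
  assumes "(g has_field_derivative dg) (at 0)" "\<forall>j\<le>d. ((\<lambda>s. a s j) has_field_derivative da j) (at 0)"
  shows "has_fls_derivative (\<lambda>s. big (g s) (a s) d) (big dg da d)"
  unfolding has_fls_derivative_def
proof (intro conjI exI allI)
  show "eventually (\<lambda>s. \<forall>n< -1. big (g s) (a s) d $$ n = 0) (nhds 0)" by (simp add: big_nth)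
  fix n
  show "((\<lambda>s. big (g s) (a s) d $$ n) has_field_derivative big dg da d $$ n) (at 0)"
    unfolding big_nth using assms by (cases "n = -1"; cases "0 \<le> n \<and> n \<le> int d") auto
qed

lemma has_fls_derivative_small:
  assumes "(g has_field_derivative dg) (at 0)" "\<forall>j\<le>e. ((\<lambda>s. b s j) has_field_derivative db j) (at 0)"
  shows "has_fls_derivative (\<lambda>s. small (g s) (b s) e) (small dg db e)"
  unfolding has_fls_derivative_def
proof (intro conjI exI allI)
  show "eventually (\<lambda>s. \<forall>n< - int e. small (g s) (b s) e $$ n = 0) (nhds 0)" by (simp add: small_nth)
  fix n
  show "((\<lambda>s. small (g s) (b s) e $$ n) has_field_derivative small dg db e $$ n) (at 0)"
    unfolding small_nth using assms by (cases "n = 1"; cases "- int e \<le> n \<and> n \<le> 0") auto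
qed

lemma has_fls_derivative_inverse_big:
  assumes "(g has_field_derivative dg) (at 0)" "\<forall>j\<le>d. ((\<lambda>s. a s j) has_field_derivative da j) (at 0)"
    "g 0 \<noteq> 0"
  shows "has_fls_derivative (\<lambda>s. inverse (big (g s) (a s) d)) (- big dg da d * inverse (big (g 0) (a 0) d) ^ 2)"
  using has_fls_derivative_inverse[OF has_fls_derivative_big[OF assms(1,2)], of "-1"] assms(3)
  by (simp add: big_nth)

lemma fls_compose_fps_X_right: "fls_compose_fps F fps_X = (F :: complex fls)"
proof -
  have "fls_compose_fps F fps_X =
      fps_to_fls (fls_base_factor_to_fps F) * fps_to_fls fps_X powi fls_subdegree F"
    by (simp only: fls_compose_fps_def fps_compose_fps_X)
  also have "fps_to_fls fps_X = (fls_X :: complex fls)" by (intro fls_eqI) simp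
  also have "fps_to_fls (fls_base_factor_to_fps F) * fls_X powi fls_subdegree F =
      fls_shift (- fls_subdegree F) (fps_to_fls (fls_base_factor_to_fps F))"
    by (simp add: fls_X_intpow_times_conv_shift(2))
  also have "\<dots> = F" by (rule fls_conv_base_factor_to_fps_shift_subdegree[symmetric])
  finally show ?thesis .
qed

lemma fls_compose_fps_sum:
  assumes "H \<noteq> 0" "fps_nth H 0 = 0"
  shows "fls_compose_fps (\<Sum>i\<in>I. f i) H = (\<Sum>i\<in>I. fls_compose_fps (f i) H)"
  by (induction I rule: infinite_finite_induct) (auto simp: fls_compose_fps_add assms)

text \<open>A series of subdegree -1 tests every coefficient: D A^m has its lowest term in degree -1
  when m = subdegree D + 1.\<close>

lemma fls_eq_0_if_residues_vanish:
  fixes A D :: "complex fls"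
  assumes "A \<noteq> 0" "fls_subdegree A = -1" "\<forall>m. fls_residue (D * A powi m) = 0"
  shows "D = 0"
proof (rule ccontr)
  assume D: "D \<noteq> 0"
  define m where "m = fls_subdegree D + 1"
  have nz: "D * A powi m \<noteq> 0" using D assms(1) by simp
  have "fls_subdegree (D * A powi m) = -1" using D assms(1,2) by (simp add: m_def)
  then have "(D * A powi m) $$ (-1) \<noteq> 0" using nth_fls_subdegree_nonzero[OF nz] by simp
  then show False using assms(3) by simp
qed

section \<open>Expansions at a simple pole\<close>

text \<open>In the local coordinate x at one of the two points, A = \<gamma>/x + \<dots> has a simple pole and
  B = \<gamma>x + \<Sum>j\<le>e. b_j x^(-j) is the other function: (A, B) = (Q, P) with e = d1 at infinity_Q
  and (A, B) = (P, Q) with e = d2 at infinity_P; accordingly tA, uA, UA, PhiA, VA stand for t, u_K,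
  U_K, \<Phi>_1, V_1, respectively t, v_J, V_J, \<Phi>_2, V_2.  The local parameter w = 1/A is a power
  series of subdegree 1, and composing with its inverse w_inv expands a series in powers of 1/A.\<close>

locale pole_chart =
  fixes \<gamma> :: complex and a b :: "nat \<Rightarrow> complex" and d e :: nat
  assumes gamma_nonzero: "\<gamma> \<noteq> 0"
begin

abbreviation A where "A \<equiv> big \<gamma> a d"
abbreviation B where "B \<equiv> small \<gamma> b e"

definition w where "w = locpar A"
definition w_inv where "w_inv = fps_inv w"
definition tA where "tA = fres B A"
definition uA where "uA K = - fres (B * inverse A ^ K) A"
definition UA where "UA K = exp_coeff A B (- (int K + 1)) / of_nat K"
definition phiA where "phiA = Abs_fps (\<lambda>n. if n = 0 then 0 else - UA n)"
definition PhiA where "PhiA = fps_to_fls (fps_compose phiA w)"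
definition VA where "VA x = (\<Sum>K\<in>{1..e+1}. fls_const (uA K / of_nat K) * x ^ K)"
definition GA where "GA = VA A + PhiA"

lemma A_nonzero: "A \<noteq> 0"
  using big_nonzero[OF gamma_nonzero] .

lemma fls_subdegree_A: "fls_subdegree A = -1"
  using fls_subdegree_big[OF gamma_nonzero] .

lemma inverse_A_nth_1: "inverse A $$ 1 = inverse \<gamma>"
  using fls_inverse_base[OF A_nonzero] by (simp add: fls_subdegree_A big_nth)

lemma A_power_int_mult: "A powi k * A powi l = A powi (k + l)"
  using power_int_add[of A k l] A_nonzero by simp

lemma inverse_A_eq: "inverse A = A powi (-1)"
  by (simp add: power_int_minus)

lemma A_power_int_vanishes_below: "fls_vanishes_below (A powi k) (- k)"
  using fls_vanishes_below_subdegree[of "A powi k"] by (simp add: fls_subdegree_A)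

lemma inverse_A_vanishes_below: "fls_vanishes_below (inverse A) 1"
  using A_power_int_vanishes_below[of "-1"] unfolding inverse_A_eq by simp

lemma deriv_A_vanishes_below: "fls_vanishes_below (fls_deriv A) (-2)"
  using fls_vanishes_below_deriv[OF fls_vanishes_below_big[of \<gamma> a d]] by simp

lemma residue_A_power_int_deriv: "fls_residue (A powi k * fls_deriv A) = (if k = -1 then -1 else 0)"
  using fls_residue_power_int_times_deriv[OF A_nonzero, of k] by (simp add: fls_subdegree_A)

lemma w_eq: "fps_to_fls w = inverse A"
  unfolding w_def locpar_def by (rule fls_regpart_to_fls_trivial) (simp add: fls_subdegree_A)

lemma w_nth_0: "w $ 0 = 0"
proof -
  have "fps_to_fls w $$ 0 = 0"
    unfolding w_eq using fls_eq0_below_subdegree[of 0 "inverse A"] by (simp add: fls_subdegree_A)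
  then show ?thesis by simp
qed

lemma w_nth_1: "w $ Suc 0 = inverse \<gamma>"
proof -
  have "fps_to_fls w $$ 1 = inverse \<gamma>" unfolding w_eq by (rule inverse_A_nth_1)
  then show ?thesis by simp
qed

lemma w_nonzero: "w \<noteq> 0"
  using w_nth_1 gamma_nonzero by auto

lemma subdegree_w: "subdegree w = 1"
  by (rule subdegreeI) (use w_nth_0 w_nth_1 gamma_nonzero in \<open>auto simp: less_Suc_eq_0_disj\<close>)

lemma w_inv_nth_0: "w_inv $ 0 = 0"
  unfolding w_inv_def fps_inv_def by simp

lemma w_inv_nonzero: "w_inv \<noteq> 0"
proof -
  have "w_inv $ 1 = \<gamma>" unfolding w_inv_def fps_inv_def using w_nth_1 gamma_nonzero by (simp add: divide_inverse)
  then show ?thesis using gamma_nonzero by auto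
qed

lemma compose_w_inv_w: "fls_compose_fps (fls_compose_fps f w_inv) w = f"
proof -
  have "w_inv oo w = fps_X" unfolding w_inv_def using fps_inv[of w] w_nth_0 w_nth_1 gamma_nonzero by simp
  then show ?thesis
    using fls_compose_fps_assoc[OF w_inv_nonzero w_inv_nth_0 w_nonzero w_nth_0] fls_compose_fps_X_right by simp
qed

lemma compose_X_intpow_w: "fls_compose_fps (fls_X_intpow m) w = A powi (- m)"
proof -
  have "fls_compose_fps (fls_X powi m) w = fls_compose_fps fls_X w powi m"
    by (rule fls_compose_fps_powi[OF w_nonzero w_nth_0])
  then show ?thesis by (simp add: w_eq power_int_inverse power_int_minus)
qed

lemma compose_w_split:
  assumes "fls_vanishes_below g N0"
  obtains T where "fls_compose_fps g w = (\<Sum>m\<in>{N0..N}. fls_const (g $$ m) * A powi (- m)) + T"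
    and "fls_vanishes_below T (N + 1)"
proof -
  define P0 where "P0 = (\<Sum>m\<in>{N0..N}. fls_const (g $$ m) * fls_X_intpow m)"
  have P0n: "P0 $$ k = (if N0 \<le> k \<and> k \<le> N then g $$ k else 0)" for k
  proof -
    have "P0 $$ k = (\<Sum>m\<in>{N0..N}. if k = m then g $$ m else 0)"
      unfolding P0_def by (simp add: fls_nth_sum if_distrib cong: if_cong)
    then show ?thesis by (simp add: sum.delta[OF finite_atLeastAtMost] eq_commute[of k])
  qed
  have T0: "fls_vanishes_below (g - P0) (N + 1)"
    using assms unfolding fls_vanishes_below_def by (auto simp: P0n)
  have "fls_compose_fps g w = fls_compose_fps P0 w + fls_compose_fps (g - P0) w"
    by (simp add: fls_compose_fps_add[OF w_nonzero w_nth_0, symmetric])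
  also have "fls_compose_fps P0 w = (\<Sum>m\<in>{N0..N}. fls_const (g $$ m) * A powi (- m))"
    unfolding P0_def
    by (simp add: fls_compose_fps_sum[OF w_nonzero w_nth_0] fls_compose_fps_mult[OF w_nonzero w_nth_0]
        compose_X_intpow_w del: fls_shift_nth)
  finally show ?thesis
    using that fls_vanishes_below_compose_fps[OF T0 w_nth_0 subdegree_w] by blast
qed

lemma nth_compose_w_inv: "fls_compose_fps f w_inv $$ n = - fls_residue (f * A powi (n - 1) * fls_deriv A)"
proof -
  define g where "g = fls_compose_fps f w_inv"
  define N0 where "N0 = min n (fls_subdegree g)"
  have "fls_vanishes_below g N0"
    unfolding N0_def using fls_vanishes_below_subdegree[of g] fls_vanishes_below_mono by simp
  then obtain T where T0: "fls_compose_fps g w = (\<Sum>m\<in>{N0..n}. fls_const (g $$ m) * A powi (- m)) + T"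
    and lowT: "fls_vanishes_below T (n + 1)"
    by (rule compose_w_split)
  have T: "f = (\<Sum>m\<in>{N0..n}. fls_const (g $$ m) * A powi (- m)) + T"
    using T0 compose_w_inv_w[of f] unfolding g_def by simp
  have rT: "fls_residue (T * A powi (n - 1) * fls_deriv A) = 0"
    using fls_vanishes_below_mult[OF fls_vanishes_below_mult[OF lowT A_power_int_vanishes_below[of "n - 1"]]
        deriv_A_vanishes_below]
    by (intro fls_residue_eq_0_if_vanishes_below) simp
  have "f * A powi (n - 1) * fls_deriv A =
     (\<Sum>m\<in>{N0..n}. fls_const (g $$ m) * (A powi (- m + (n - 1)) * fls_deriv A)) + T * A powi (n - 1) * fls_deriv A"
    unfolding T distrib_right sum_distrib_right A_power_int_mult[symmetric] by (simp only: mult.assoc)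
  then have "fls_residue (f * A powi (n - 1) * fls_deriv A) =
     (\<Sum>m\<in>{N0..n}. g $$ m * fls_residue (A powi (- m + (n - 1)) * fls_deriv A))"
    using rT by (simp only: fls_residue_add fls_residue_sum fls_residue_fls_const_times) simp
  also have "\<dots> = (\<Sum>m\<in>{N0..n}. if m = n then - g $$ m else 0)"
    by (intro sum.cong refl) (simp add: residue_A_power_int_deriv del: fls_residue_def)
  also have "\<dots> = - g $$ n" using N0_def by simp
  finally show ?thesis unfolding g_def by simp
qed

lemma UA_eq_residue: "UA K = - fres (B * A ^ K) A / of_nat K"
proof -
  have "exp_coeff A B (- (int K + 1)) = fls_compose_fps B w_inv $$ (int K + 1)"
    unfolding exp_coeff_def w_inv_def w_def by (simp add: add.commute)
  then show ?thesis unfolding UA_def fres_def by (simp add: nth_compose_w_inv mult.assoc)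
qed

lemma uA_eq_residue: "uA K = - fls_residue (B * A powi (- int K) * fls_deriv A)"
  unfolding uA_def fres_def by (simp add: power_int_minus power_inverse mult.assoc)

lemma residue_PhiA_times:
  assumes "fls_vanishes_below C (- int N - 1)"
  shows "fls_residue (PhiA * C) = - (\<Sum>k\<in>{1..N}. UA k * fls_residue (A powi (- int k) * C))"
proof -
  have "PhiA = fls_compose_fps (fps_to_fls phiA) w"
    unfolding PhiA_def using fls_compose_fps_to_fls[OF w_nonzero w_nth_0] by simp
  moreover obtain T where "fls_compose_fps (fps_to_fls phiA) w =
      (\<Sum>m\<in>{0..int N}. fls_const (fps_to_fls phiA $$ m) * A powi (- m)) + T"
    and lowT: "fls_vanishes_below T (int N + 1)"
    by (rule compose_w_split[OF fls_vanishes_below_fps_to_fls])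
  ultimately have T: "PhiA = (\<Sum>m\<in>{0..int N}. fls_const (fps_to_fls phiA $$ m) * A powi (- m)) + T"
    by simp
  have rT: "fls_residue (T * C) = 0"
    using fls_vanishes_below_mult[OF lowT assms] by (intro fls_residue_eq_0_if_vanishes_below) simp
  have "PhiA * C = (\<Sum>m\<in>{0..int N}. fls_const (fps_to_fls phiA $$ m) * (A powi (- m) * C)) + T * C"
    unfolding T distrib_right sum_distrib_right mult.assoc ..
  then have "fls_residue (PhiA * C) =
      (\<Sum>m\<in>{0..int N}. fps_to_fls phiA $$ m * fls_residue (A powi (- m) * C))"
    using rT by (simp only: fls_residue_add fls_residue_sum fls_residue_fls_const_times) simp
  also have "\<dots> = (\<Sum>k\<in>{0..N}. fps_to_fls phiA $$ int k * fls_residue (A powi (- int k) * C))"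
  proof -
    have "{0..int N} = int ` {0..N}" by (simp add: image_int_atLeastAtMost)
    then show ?thesis by (simp add: sum.reindex del: fls_residue_def)
  qed
  also have "\<dots> = (\<Sum>k\<in>{1..N}. - UA k * fls_residue (A powi (- int k) * C))"
  proof -
    have "{0..N} = insert 0 {1..N}" by auto
    then show ?thesis by (simp add: phiA_def)
  qed
  finally show ?thesis by (simp add: sum_negf)
qed

lemma residue_B_PhiA: "fres (B * PhiA) A = (\<Sum>K\<in>{1..e+1}. uA K * UA K)"
proof -
  have "fls_vanishes_below (B * fls_deriv A) (- int (e+1) - 1)"
    by (rule fls_vanishes_below_mono[OF fls_vanishes_below_mult[OF fls_vanishes_below_small
          deriv_A_vanishes_below]]) simp
  from residue_PhiA_times[OF this] show ?thesis
    unfolding fres_def by (simp add: uA_eq_residue sum_negf[symmetric] ac_simps)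
qed

lemma uA_eq_0: "K \<ge> e + 2 \<Longrightarrow> uA K = 0"
proof -
  assume K: "K \<ge> e + 2"
  have "fls_vanishes_below (B * A powi (- int K) * fls_deriv A) (- int e + int K + -2)"
    using fls_vanishes_below_mult[OF fls_vanishes_below_mult[OF fls_vanishes_below_small
          A_power_int_vanishes_below[of "- int K"]] deriv_A_vanishes_below] by simp
  then have "fls_vanishes_below (B * A powi (- int K) * fls_deriv A) 0"
    by (rule fls_vanishes_below_mono) (use K in simp)
  then show ?thesis unfolding uA_eq_residue by (simp add: fls_residue_eq_0_if_vanishes_below del: fls_residue_def)
qed

lemma residue_B_A_power_int:
  "fls_residue (B * A powi m * fls_deriv A) =
     (if m \<ge> 1 then - of_int m * UA (nat m) else if m = 0 then tA else - uA (nat (- m)))"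
proof -
  consider "m \<ge> 1" | "m = 0" | "m \<le> -1" by linarith
  then show ?thesis
  proof cases
    case 1
    then have "A ^ nat m = A powi m" by (simp add: power_int_def)
    then have "UA (nat m) = - fls_residue (B * A powi m * fls_deriv A) / of_int m"
      unfolding UA_eq_residue fres_def using 1 by (simp add: mult.assoc del: fls_residue_def)
    then show ?thesis using 1 by simp
  next
    case 2 then show ?thesis unfolding tA_def fres_def by simp
  next
    case 3 then show ?thesis unfolding uA_eq_residue by simp
  qed
qed

lemma residue_deriv_VA_times:
  "fls_residue (fls_deriv (VA A) * A powi m) =
     (if 1 \<le> - m \<and> - m \<le> int e + 1 then - uA (nat (- m)) else 0)"
proof -
  have summand: "fls_deriv (fls_const (uA K / of_nat K) * A ^ K) * A powi m =
      fls_const (uA K) * (A powi (int K - 1 + m) * fls_deriv A)" if "K \<in> {1..e+1}" for K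
  proof -
    have "fls_deriv (A ^ K) = of_int (int K) * A powi (int K - 1) * fls_deriv A"
      using fls_deriv_power_int[of A "int K"] by simp
    then have "fls_deriv (fls_const (uA K / of_nat K) * A ^ K) * A powi m =
        fls_const (uA K / of_nat K) * of_nat K * (A powi (int K - 1) * A powi m * fls_deriv A)"
      by (simp add: ac_simps)
    also have "fls_const (uA K / of_nat K) * of_nat K = fls_const (uA K)"
      using that by (simp add: fls_of_nat fls_const_mult_const)
    finally show ?thesis by (simp add: A_power_int_mult mult.assoc)
  qed
  have "fls_residue (fls_deriv (VA A) * A powi m) =
      (\<Sum>K\<in>{1..e+1}. uA K * fls_residue (A powi (int K - 1 + m) * fls_deriv A))"
    unfolding VA_def fls_deriv_sum sum_distrib_right
    by (simp only: fls_residue_sum) (simp only: summand fls_residue_fls_const_times cong: sum.cong)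
  also have "\<dots> = (\<Sum>K\<in>{1..e+1}. if K = nat (- m) then - uA K else 0)"
    by (intro sum.cong refl) (simp only: residue_A_power_int_deriv, auto)
  also have "\<dots> = (if 1 \<le> - m \<and> - m \<le> int e + 1 then - uA (nat (- m)) else 0)"
    by (simp add: sum.delta[OF finite_atLeastAtMost]) linarith
  finally show ?thesis .
qed

lemma residue_deriv_PhiA_times:
  "fls_residue (fls_deriv PhiA * A powi m) = (if m \<ge> 1 then - of_int m * UA (nat m) else 0)"
proof -
  have "fls_vanishes_below (A powi (m - 1) * fls_deriv A) (- (m - 1) + -2)"
    by (rule fls_vanishes_below_mult[OF A_power_int_vanishes_below deriv_A_vanishes_below])
  then have low: "fls_vanishes_below (A powi (m - 1) * fls_deriv A) (- int (nat m) - 1)"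
    by (rule fls_vanishes_below_mono) simp
  have "fls_residue (fls_deriv PhiA * A powi m) = - fls_residue (PhiA * fls_deriv (A powi m))"
    by (rule fls_residue_times_deriv)
  also have "fls_deriv (A powi m) = fls_const (of_int m) * (A powi (m - 1) * fls_deriv A)"
    by (simp add: fls_deriv_power_int fls_of_int mult.assoc)
  also have "fls_residue (PhiA * (fls_const (of_int m) * (A powi (m - 1) * fls_deriv A))) =
      of_int m * fls_residue (PhiA * (A powi (m - 1) * fls_deriv A))"
    by (simp only: mult.left_commute[of PhiA] fls_residue_fls_const_times)
  also have "fls_residue (PhiA * (A powi (m - 1) * fls_deriv A)) =
      - (\<Sum>k\<in>{1..nat m}. UA k * fls_residue (A powi (- int k) * (A powi (m - 1) * fls_deriv A)))"
    by (rule residue_PhiA_times[OF low])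
  also have "(\<Sum>k\<in>{1..nat m}. UA k * fls_residue (A powi (- int k) * (A powi (m - 1) * fls_deriv A))) =
      (\<Sum>k\<in>{1..nat m}. if k = nat m then - UA k else 0)"
  proof (intro sum.cong refl)
    fix k assume k: "k \<in> {1..nat m}"
    have "A powi (- int k) * (A powi (m - 1) * fls_deriv A) = A powi (- int k + (m - 1)) * fls_deriv A"
      by (simp only: mult.assoc[symmetric] A_power_int_mult)
    then have "fls_residue (A powi (- int k) * (A powi (m - 1) * fls_deriv A)) =
        (if - int k + (m - 1) = -1 then -1 else 0)"
      by (simp only: residue_A_power_int_deriv)
    then show "UA k * fls_residue (A powi (- int k) * (A powi (m - 1) * fls_deriv A)) =
        (if k = nat m then - UA k else 0)"
      using k by auto
  qed
  also have "(\<Sum>k\<in>{1..nat m}. if k = nat m then - UA k else 0) = (if m \<ge> 1 then - UA (nat m) else 0)"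
    by (simp add: sum.delta'[OF finite_atLeastAtMost]) linarith
  finally show ?thesis by auto
qed

text \<open>The key identity d(V(A) + \<Phi>) = (B + t/A) dA, i.e. dG = y dx - t d(log x) in the
  spectral-curve notation: both sides have the same residues against every power of A.\<close>

lemma deriv_GA: "fls_deriv GA = (B + fls_const tA * inverse A) * fls_deriv A"
proof -
  define D where "D = fls_deriv GA - (B + fls_const tA * inverse A) * fls_deriv A"
  have "fls_residue (D * A powi m) = 0" for m
  proof -
    have "inverse A * fls_deriv A * A powi m = A powi (-1) * A powi m * fls_deriv A"
      unfolding inverse_A_eq by (simp only: ac_simps)
    then have i: "inverse A * fls_deriv A * A powi m = A powi (m - 1) * fls_deriv A"
      unfolding A_power_int_mult by simp
    have "D * A powi m = fls_deriv (VA A) * A powi m + fls_deriv PhiA * A powi m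
        - (B * A powi m * fls_deriv A + fls_const tA * (inverse A * fls_deriv A * A powi m))"
      unfolding D_def GA_def fls_deriv_add by (simp only: ring_distribs) (simp only: ac_simps)
    then have "fls_residue (D * A powi m) = fls_residue (fls_deriv (VA A) * A powi m)
        + fls_residue (fls_deriv PhiA * A powi m)
        - (fls_residue (B * A powi m * fls_deriv A) + tA * fls_residue (A powi (m - 1) * fls_deriv A))"
      unfolding i by (simp only: fls_residue_add fls_residue_fls_const_times fls_residue_diff)
    moreover have "- m > int e + 1 \<Longrightarrow> uA (nat (- m)) = 0" using uA_eq_0[of "nat (- m)"] by linarith
    ultimately show ?thesis
      unfolding residue_deriv_VA_times residue_deriv_PhiA_times residue_B_A_power_int
        residue_A_power_int_deriv by auto
  qed
  then have "D = 0" using fls_eq_0_if_residues_vanish[OF A_nonzero fls_subdegree_A] by blast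
  then show ?thesis unfolding D_def by simp
qed

lemma PhiA_vanishes_below: "fls_vanishes_below PhiA 1"
proof -
  have "(phiA oo w) $ 0 = 0" by (simp add: phiA_def)
  then show ?thesis unfolding PhiA_def fls_vanishes_below_def by (auto simp: not_less)
qed

lemma residue_GA_log_deriv_A: "fls_residue (GA * (fls_deriv A * inverse A)) = 0"
proof -
  have "VA A * (fls_deriv A * inverse A) =
      (\<Sum>K\<in>{1..e+1}. fls_const (uA K / of_nat K) * (A powi (int K - 1) * fls_deriv A))"
    unfolding VA_def sum_distrib_right inverse_A_eq
    by (intro sum.cong refl) (simp add: A_power_int_mult[of "int K" "-1" for K, simplified, symmetric] ac_simps)
  then have "fls_residue (VA A * (fls_deriv A * inverse A)) = 0"
    by (simp only: fls_residue_sum fls_residue_fls_const_times residue_A_power_int_deriv)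
       (auto intro: sum.neutral)
  moreover have "fls_residue (PhiA * (fls_deriv A * inverse A)) = 0"
    using fls_vanishes_below_mult[OF PhiA_vanishes_below
        fls_vanishes_below_mult[OF deriv_A_vanishes_below inverse_A_vanishes_below]]
    by (intro fls_residue_eq_0_if_vanishes_below) simp
  ultimately show ?thesis unfolding GA_def distrib_right fls_residue_add by simp
qed

lemma GA_nth_0: "GA $$ 0 = VA A $$ 0"
  unfolding GA_def PhiA_def by (simp add: phiA_def)

lemma residue_GA_times:
  assumes "fls_vanishes_below \<Omega> (- int (e+1) - 1)"
  shows "- fls_residue (GA * \<Omega>) = (\<Sum>K\<in>{1..e+1}. uA K * (- fls_residue (A ^ K * \<Omega>) / of_nat K))
     - (\<Sum>K\<in>{1..e+1}. UA K * (- fls_residue (A powi (- int K) * \<Omega>)))"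
proof -
  have "fls_residue (VA A * \<Omega>) = (\<Sum>K\<in>{1..e+1}. uA K / of_nat K * fls_residue (A ^ K * \<Omega>))"
    unfolding VA_def sum_distrib_right by (simp only: fls_residue_sum mult.assoc fls_residue_fls_const_times)
  moreover have "fls_residue (PhiA * \<Omega>) = - (\<Sum>k\<in>{1..e+1}. UA k * fls_residue (A powi (- int k) * \<Omega>))"
    by (rule residue_PhiA_times[OF assms])
  ultimately show ?thesis unfolding GA_def distrib_right fls_residue_add
    by (simp add: sum_negf[symmetric])
qed

text \<open>Since A has a simple pole, dA/A + dx/x is regular at x = 0.\<close>

definition log_deriv_A_reg where "log_deriv_A_reg = inverse A * fls_deriv A + fls_X_inv"

lemma log_deriv_A_reg_vanishes_below: "fls_vanishes_below log_deriv_A_reg 0"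
proof -
  have l: "fls_vanishes_below (inverse A * fls_deriv A) (-1)"
    using fls_vanishes_below_mult[OF inverse_A_vanishes_below deriv_A_vanishes_below] by simp
  have r: "(inverse A * fls_deriv A) $$ (-1) = -1"
    using fls_residue_deriv_times_inverse_eq_subdegree(2)[of A] fls_subdegree_A by simp
  show ?thesis unfolding fls_vanishes_below_def log_deriv_A_reg_def
  proof safe
    fix k :: int assume "k < 0"
    then show "(inverse A * fls_deriv A + fls_X_inv) $$ k = 0"
      using l r unfolding fls_vanishes_below_def by (cases "k = -1") auto
  qed
qed

lemma vanishes_below_0_if_deriv_eq:
  assumes "fls_deriv h = fls_const c * log_deriv_A_reg" "h $$ 0 = 0"
  shows "fls_vanishes_below h 0"
  unfolding fls_vanishes_below_def
proof safe
  fix n :: int assume n: "n < 0"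
  have "fls_deriv h $$ (n - 1) = of_int n * h $$ n" by simp
  moreover have "fls_deriv h $$ (n - 1) = 0"
    using log_deriv_A_reg_vanishes_below n unfolding assms(1) fls_vanishes_below_def by simp
  ultimately show "h $$ n = 0" using n by simp
qed

text \<open>In the following, S is a primitive of B dA - t dx/x; the logarithmic term is removed so
  that the primitive exists.\<close>

lemma deriv_GA_minus_primitive:
  assumes "fls_deriv S = B * fls_deriv A - fls_const tA * fls_X_inv"
  shows "fls_deriv (GA - S) = fls_const tA * log_deriv_A_reg"
  unfolding fls_deriv_sub deriv_GA assms log_deriv_A_reg_def by (simp add: algebra_simps)

lemma GA_nth_0_eq_residue:
  assumes S': "fls_deriv S = B * fls_deriv A - fls_const tA * fls_X_inv"
  shows "GA $$ 0 - S $$ 0 = fls_residue (S * (fls_deriv A * inverse A))"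
proof -
  define H where "H = GA - S"
  define h where "h = H - fls_const (H $$ 0)"
  have "fls_deriv h = fls_const tA * log_deriv_A_reg"
    unfolding h_def H_def using deriv_GA_minus_primitive[OF S'] by simp
  then have lh: "fls_vanishes_below h 0" by (rule vanishes_below_0_if_deriv_eq) (simp add: h_def)
  have "H * log_deriv_A_reg = fls_const (H $$ 0) * log_deriv_A_reg + h * log_deriv_A_reg"
    unfolding h_def by (simp add: algebra_simps)
  then have "fls_residue (H * log_deriv_A_reg) = 0"
    using fls_residue_eq_0_if_vanishes_below[OF log_deriv_A_reg_vanishes_below]
      fls_residue_eq_0_if_vanishes_below[of "h * log_deriv_A_reg"]
      fls_vanishes_below_mult[OF lh log_deriv_A_reg_vanishes_below]
    by (simp only: fls_residue_add fls_residue_fls_const_times) simp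
  moreover have "fls_deriv A * inverse A = log_deriv_A_reg - fls_X_inv"
    unfolding log_deriv_A_reg_def by (simp add: mult.commute)
  ultimately have "fls_residue (H * (fls_deriv A * inverse A)) = - H $$ 0"
    by (simp only: right_diff_distrib fls_residue_diff fls_residue_times_X_inv) simp
  then show ?thesis
    using residue_GA_log_deriv_A unfolding H_def left_diff_distrib fls_residue_diff
    by (simp add: minus_equation_iff)
qed

text \<open>The variation \<Omega> = \<delta>B dA - \<delta>A dB of B dA, paired with G.  Here dS is the variation of the
  primitive S, W = dS - B \<delta>A, and dt the variation of t.\<close>

lemma residue_GA_variation:
  assumes S': "fls_deriv S = B * fls_deriv A - fls_const tA * fls_X_inv"
    and dS': "fls_deriv dS = dB * fls_deriv A + B * fls_deriv dA - fls_const dt * fls_X_inv"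
  shows "- fls_residue (GA * (dB * fls_deriv A - dA * fls_deriv B)) =
     - fls_residue (S * (dB * fls_deriv A - dA * fls_deriv B))
     + tA * fls_residue ((dS - B * dA) * (fls_deriv A * inverse A)) + tA * (dS - B * dA) $$ 0
     - (GA $$ 0 - S $$ 0) * dt"
proof -
  define H where "H = GA - S"
  define W where "W = dS - B * dA"
  define \<Omega> where "\<Omega> = dB * fls_deriv A - dA * fls_deriv B"
  have \<Omega>: "\<Omega> = fls_deriv W + fls_const dt * fls_X_inv"
    unfolding W_def \<Omega>_def fls_deriv_sub dS' by (simp add: algebra_simps)
  have "fls_residue (H * \<Omega>) = fls_residue (H * fls_deriv W) + dt * H $$ 0"
    unfolding \<Omega>
    by (simp only: distrib_left fls_residue_add mult.left_commute[of H] fls_residue_fls_const_times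
        fls_residue_times_X_inv)
  also have "fls_residue (H * fls_deriv W) = - fls_residue (fls_deriv H * W)"
    using fls_residue_times_deriv[of H W] by simp
  also have "fls_deriv H * W = fls_const tA * (W * (fls_deriv A * inverse A) + fls_X_inv * W)"
    unfolding H_def deriv_GA_minus_primitive[OF S'] log_deriv_A_reg_def by (simp add: algebra_simps)
  finally have "fls_residue (H * \<Omega>) =
      - (tA * (fls_residue (W * (fls_deriv A * inverse A)) + W $$ 0)) + dt * H $$ 0"
    by (simp only: fls_residue_fls_const_times fls_residue_add fls_residue_X_inv_times)
  moreover have "fls_residue (GA * \<Omega>) = fls_residue (S * \<Omega>) + fls_residue (H * \<Omega>)"
    unfolding H_def by (simp only: left_diff_distrib fls_residue_diff) simp
  ultimately show ?thesis unfolding W_def \<Omega>_def H_def by (simp add: algebra_simps)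
qed

lemma residue_log_deriv_variation:
  assumes S': "fls_deriv S = B * fls_deriv A - fls_const tA * fls_X_inv"
  shows "fls_residue (dS * (fls_deriv A * inverse A)
        + S * (fls_deriv dA * inverse A + fls_deriv A * (- dA * inverse A ^ 2))) =
     fls_residue ((dS - B * dA) * (fls_deriv A * inverse A)) + tA * (dA * inverse A) $$ 0"
proof -
  have d: "fls_deriv dA * inverse A + fls_deriv A * (- dA * inverse A ^ 2) = fls_deriv (dA * inverse A)"
    by (simp add: fls_inverse_deriv algebra_simps)
  have "fls_residue (S * fls_deriv (dA * inverse A)) = - fls_residue (fls_deriv S * (dA * inverse A))"
    using fls_residue_times_deriv[of S "dA * inverse A"] by simp
  also have "fls_deriv S * (dA * inverse A) =
      B * dA * (fls_deriv A * inverse A) - fls_const tA * (fls_X_inv * (dA * inverse A))"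
    unfolding S' by (simp add: algebra_simps)
  finally have "fls_residue (S * fls_deriv (dA * inverse A)) =
      - fls_residue (B * dA * (fls_deriv A * inverse A)) + tA * (dA * inverse A) $$ 0"
    by (simp only: fls_residue_diff fls_residue_fls_const_times fls_residue_X_inv_times) simp
  then show ?thesis unfolding d left_diff_distrib distrib_left fls_residue_add fls_residue_diff by simp
qed

lemma big_times_inverse_A_nth_0: "(big \<gamma>' a' d' * inverse A) $$ 0 = \<gamma>' / \<gamma>"
proof -
  have "(big \<gamma>' a' d' * inverse A) $$ 0 = (\<Sum>i=-1..0-1. big \<gamma>' a' d' $$ i * inverse A $$ (0 - i))"
    using fls_times_nth_bounded[of "-1" "big \<gamma>' a' d'" 1 "inverse A" 0] fls_vanishes_below_big
      inverse_A_vanishes_below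
    unfolding fls_vanishes_below_def by blast
  then show ?thesis by (simp add: big_nth inverse_A_nth_1 divide_inverse)
qed

lemma variation_form_vanishes_below:
  "fls_vanishes_below (small \<gamma>' b' e * fls_deriv A - big \<gamma>' a' d' * fls_deriv B) (- int (e+1) - 1)"
proof (rule fls_vanishes_below_diff)
  show "fls_vanishes_below (small \<gamma>' b' e * fls_deriv A) (- int (e + 1) - 1)"
    by (rule fls_vanishes_below_mono[OF fls_vanishes_below_mult[OF fls_vanishes_below_small
          deriv_A_vanishes_below]]) simp
  show "fls_vanishes_below (big \<gamma>' a' d' * fls_deriv B) (- int (e + 1) - 1)"
    by (rule fls_vanishes_below_mono[OF fls_vanishes_below_mult[OF fls_vanishes_below_big
          fls_vanishes_below_deriv[OF fls_vanishes_below_small]]]) simp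
qed

end

section \<open>The two points at infinity\<close>

lemma fres_times_X_X_inv: "fres (F * fls_X) fls_X_inv = - F $$ 0"
proof -
  have "F * fls_X * fls_deriv fls_X_inv = - (F * (fls_X_inv ^ 2 * fls_X))" by (simp add: algebra_simps)
  then show ?thesis unfolding fres_def fls_X_inv_power_2_times_X by (simp add: fls_X_inv_times_conv_shift)
qed

text \<open>QQ and PQ are Q and P at infinity_Q, PP and QP are P and Q at infinity_P.  The primitive
  S_Q of P dQ - t d\<lambda>/\<lambda> at infinity_Q gives, after reflection, the primitive S_P of
  Q dP - t d\<lambda>/\<lambda> at infinity_P, because PQ - S_Q is a primitive of Q dP + t d\<lambda>/\<lambda>.\<close>

locale spectral_curve =
  fixes d1 d2 :: nat and \<gamma> :: complex and \<alpha> \<beta> :: "nat \<Rightarrow> complex"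
  assumes gamma_nonzero: "\<gamma> \<noteq> 0"
begin

sublocale infQ: pole_chart \<gamma> \<alpha> \<beta> d2 d1 by unfold_locales (rule gamma_nonzero)
sublocale infP: pole_chart \<gamma> \<beta> \<alpha> d1 d2 by unfold_locales (rule gamma_nonzero)

abbreviation "QQ \<equiv> big \<gamma> \<alpha> d2"
abbreviation "PQ \<equiv> small \<gamma> \<beta> d1"
abbreviation "PP \<equiv> big \<gamma> \<beta> d1"
abbreviation "QP \<equiv> small \<gamma> \<alpha> d2"

abbreviation "t \<equiv> infQ.tA"

definition S_Q where "S_Q = fls_integral (PQ * fls_deriv QQ - fls_const t * fls_X_inv)"
definition S_P where "S_P = PP * QP - fls_reflect S_Q"

lemma PP_eq_reflect: "PP = fls_reflect PQ"
  by (simp add: fls_reflect_small)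

lemma QP_eq_reflect: "QP = fls_reflect QQ"
  by (simp add: fls_reflect_big)

lemma t_symmetric: "infP.tA = t"
proof -
  have "infP.tA = fls_residue (fls_reflect QQ * fls_deriv (fls_reflect PQ))"
    unfolding infP.tA_def fres_def PP_eq_reflect QP_eq_reflect ..
  also have "\<dots> = - fls_residue (QQ * fls_deriv PQ)"
    by (rule fls_residue_reflect) (simp_all add: laurent_poly_big laurent_poly_small)
  also have "\<dots> = fls_residue (fls_deriv QQ * PQ)" using fls_residue_times_deriv[of QQ PQ] by simp
  also have "\<dots> = t" unfolding infQ.tA_def fres_def by (simp add: mult.commute)
  finally show ?thesis .
qed

lemma laurent_poly_S_Q: "laurent_poly S_Q"
  unfolding S_Q_def
  by (intro laurent_poly_integral laurent_poly_diff laurent_poly_mult laurent_poly_deriv laurent_poly_big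
      laurent_poly_small laurent_poly_const laurent_poly_X_inv)

lemma deriv_S_Q: "fls_deriv S_Q = PQ * fls_deriv QQ - fls_const t * fls_X_inv"
  unfolding S_Q_def
proof (rule fls_deriv_fls_integral)
  have "fls_residue (PQ * fls_deriv QQ) = t" unfolding infQ.tA_def fres_def ..
  then show "fls_residue (PQ * fls_deriv QQ - fls_const t * fls_X_inv) = 0"
    by (simp only: fls_residue_diff fls_residue_fls_const_times) simp
qed

lemma S_Q_nth_0: "S_Q $$ 0 = 0"
  unfolding S_Q_def by simp

lemma deriv_reflect_S_Q: "fls_deriv (fls_reflect S_Q) = PP * fls_deriv QP + fls_const t * fls_X_inv"
proof -
  have "fls_reflect (fls_deriv S_Q) = fls_reflect (PQ * fls_deriv QQ) - fls_reflect (fls_const t * fls_X_inv)"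
    unfolding deriv_S_Q
    by (rule fls_reflect_diff)
       (simp_all add: laurent_poly_mult laurent_poly_deriv laurent_poly_big laurent_poly_small
        laurent_poly_const laurent_poly_X_inv)
  also have "fls_reflect (PQ * fls_deriv QQ) = - (fls_X ^ 2 * (PP * fls_deriv QP))"
    unfolding PP_eq_reflect QP_eq_reflect
    by (rule fls_reflect_times_deriv) (simp_all add: laurent_poly_big laurent_poly_small)
  also have "fls_reflect (fls_const t * fls_X_inv) = fls_const t * fls_X"
    by (simp add: fls_reflect_mult fls_reflect_const fls_reflect_X_inv laurent_poly_const laurent_poly_X_inv)
  finally have "fls_reflect (fls_deriv S_Q) = - (fls_X ^ 2 * (PP * fls_deriv QP)) - fls_const t * fls_X" .
  then have "fls_deriv (fls_reflect S_Q) =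
      - (fls_X_inv ^ 2 * (- (fls_X ^ 2 * (PP * fls_deriv QP)) - fls_const t * fls_X))"
    unfolding fls_deriv_reflect[OF laurent_poly_S_Q] by simp
  also have "\<dots> = (fls_X_inv ^ 2 * fls_X ^ 2) * (PP * fls_deriv QP) + fls_const t * (fls_X_inv ^ 2 * fls_X)"
    by (simp only: ring_distribs minus_minus minus_diff_eq mult_minus_right mult_minus_left
        diff_minus_eq_add) (simp only: ac_simps)
  finally show ?thesis
    unfolding fls_X_inv_power_2_times_X_power_2 fls_X_inv_power_2_times_X by simp
qed

lemma deriv_S_P: "fls_deriv S_P = QP * fls_deriv PP - fls_const infP.tA * fls_X_inv"
  unfolding S_P_def t_symmetric fls_deriv_sub fls_deriv_mult deriv_reflect_S_Q by (simp add: algebra_simps)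

lemma uu_eq: "uu d1 d2 \<gamma> \<alpha> \<beta> K = infQ.uA K"
  unfolding uu_def infQ.uA_def Qz_def Pz_def ..

lemma vv_eq: "vv d1 d2 \<gamma> \<alpha> \<beta> K = infP.uA K"
  unfolding vv_def infP.uA_def Pl_def Ql_def ..

lemma UU_eq: "UU d1 d2 \<gamma> \<alpha> \<beta> K = infQ.UA K"
  unfolding UU_def infQ.UA_def Qz_def Pz_def ..

lemma VV_eq: "VV d1 d2 \<gamma> \<alpha> \<beta> K = infP.UA K"
  unfolding VV_def infP.UA_def Pl_def Ql_def ..

lemma tt_eq: "tt d1 d2 \<gamma> \<alpha> \<beta> = t"
  unfolding tt_def infQ.tA_def Qz_def Pz_def ..

lemma V1_eq: "V1 d1 d2 \<gamma> \<alpha> \<beta> x = infQ.VA x"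
  unfolding V1_def infQ.VA_def uu_eq ..

lemma V2_eq: "V2 d1 d2 \<gamma> \<alpha> \<beta> x = infP.VA x"
  unfolding V2_def infP.VA_def vv_eq ..

lemma twoF_eq_pairings:
  "twoF d1 d2 lg \<gamma> \<alpha> \<beta> =
     (\<Sum>K\<in>{1..d1+1}. uu d1 d2 \<gamma> \<alpha> \<beta> K * UU d1 d2 \<gamma> \<alpha> \<beta> K)
     + (\<Sum>J\<in>{1..d2+1}. vv d1 d2 \<gamma> \<alpha> \<beta> J * VV d1 d2 \<gamma> \<alpha> \<beta> J)
     + tail d1 d2 lg \<gamma> \<alpha> \<beta>"
proof -
  have Phi1: "Phi1 d1 d2 \<gamma> \<alpha> \<beta> = infQ.PhiA"
    unfolding Phi1_def infQ.PhiA_def infQ.phiA_def infQ.w_def Qz_def UU_eq ..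
  have Phi2: "Phi2 d1 d2 \<gamma> \<alpha> \<beta> = infP.PhiA"
    unfolding Phi2_def infP.PhiA_def infP.phiA_def infP.w_def Pl_def VV_eq ..
  show ?thesis
    unfolding twoF_def Phi1 Phi2 uu_eq vv_eq UU_eq VV_eq Qz_def Pz_def Pl_def Ql_def
      infQ.residue_B_PhiA infP.residue_B_PhiA ..
qed

lemma VA_P_reflect: "fls_reflect (infP.VA PP) = infP.VA PQ"
proof -
  have "fls_reflect PP = PQ" unfolding PP_eq_reflect by (rule fls_reflect_reflect[OF laurent_poly_small])
  then show ?thesis
    unfolding infP.VA_def
    by (subst fls_reflect_sum)
       (auto simp: fls_reflect_mult fls_reflect_power fls_reflect_const laurent_poly_const
        laurent_poly_power laurent_poly_big laurent_poly_mult)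
qed

lemma laurent_poly_VA_P: "laurent_poly (infP.VA PP)"
  unfolding infP.VA_def
  by (intro laurent_poly_sum laurent_poly_mult laurent_poly_const laurent_poly_power laurent_poly_big)

lemma VA_Q_nth_0: "infQ.VA QQ $$ 0 = fls_residue (S_Q * (fls_deriv QQ * inverse QQ))"
  using infQ.GA_nth_0_eq_residue[OF deriv_S_Q] infQ.GA_nth_0 S_Q_nth_0 by simp

lemma VA_P_nth_0: "infP.VA PQ $$ 0 = (PQ * QQ) $$ 0 + fls_residue (S_P * (fls_deriv PP * inverse PP))"
proof -
  have "infP.VA PQ $$ 0 = infP.GA $$ 0"
    using fls_reflect_nth_0[OF laurent_poly_VA_P] infP.GA_nth_0 unfolding VA_P_reflect by simp
  also have "\<dots> = S_P $$ 0 + fls_residue (S_P * (fls_deriv PP * inverse PP))"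
    using infP.GA_nth_0_eq_residue[OF deriv_S_P] by (simp add: algebra_simps)
  also have "S_P $$ 0 = (PQ * QQ) $$ 0"
  proof -
    have "(PP * QP) $$ 0 = (PQ * QQ) $$ 0"
      unfolding PP_eq_reflect QP_eq_reflect using fls_reflect_nth_0[of "PQ * QQ"]
      by (simp add: fls_reflect_mult laurent_poly_big laurent_poly_small laurent_poly_mult)
    then show ?thesis unfolding S_P_def using fls_reflect_nth_0[OF laurent_poly_S_Q] S_Q_nth_0 by simp
  qed
  finally show ?thesis .
qed

lemma residue_log_term:
  "fres ((V1 d1 d2 \<gamma> \<alpha> \<beta> QQ + V2 d1 d2 \<gamma> \<alpha> \<beta> PQ - PQ * QQ) * fls_X) fls_X_inv =
     - (fls_residue (S_Q * (fls_deriv QQ * inverse QQ)) + fls_residue (S_P * (fls_deriv PP * inverse PP)))"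
  unfolding fres_times_X_X_inv V1_eq V2_eq using VA_Q_nth_0 VA_P_nth_0 by simp

text \<open>The expansions are linear in (\<gamma>, \<alpha>, \<beta>), so their variations in the direction
  (dg, da, db) are expansions of the same shape.\<close>

definition "dQQ dg da = big dg da d2"
definition "dPQ dg db = small dg db d1"
definition "dPP dg db = big dg db d1"
definition "dQP dg da = small dg da d2"

lemma laurent_poly_variations: "laurent_poly (dQQ dg da)" "laurent_poly (dPQ dg db)"
  unfolding dQQ_def dPQ_def by (simp_all add: laurent_poly_big laurent_poly_small)

lemma dPP_eq_reflect: "dPP dg db = fls_reflect (dPQ dg db)"
  unfolding dPP_def dPQ_def by (simp add: fls_reflect_small)

lemma dQP_eq_reflect: "dQP dg da = fls_reflect (dQQ dg da)"
  unfolding dQP_def dQQ_def by (simp add: fls_reflect_big)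

lemma deriv_variation_S_P:
  assumes lpd: "laurent_poly dS"
    and dS': "fls_deriv dS = dPQ dg db * fls_deriv QQ + PQ * fls_deriv (dQQ dg da) - fls_const dt * fls_X_inv"
  shows "fls_deriv (dPP dg db * QP + PP * dQP dg da - fls_reflect dS) =
     dQP dg da * fls_deriv PP + QP * fls_deriv (dPP dg db) - fls_const dt * fls_X_inv"
proof -
  note lps = laurent_poly_variations laurent_poly_big laurent_poly_small
  have "fls_reflect (fls_deriv dS) = fls_reflect (dPQ dg db * fls_deriv QQ)
      + fls_reflect (PQ * fls_deriv (dQQ dg da)) - fls_reflect (fls_const dt * fls_X_inv)"
    unfolding dS' using lps
    by (simp add: fls_reflect_add fls_reflect_diff laurent_poly_add laurent_poly_mult laurent_poly_deriv
        laurent_poly_const laurent_poly_X_inv)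
  also have "fls_reflect (dPQ dg db * fls_deriv QQ) = - (fls_X ^ 2 * (dPP dg db * fls_deriv QP))"
    unfolding dPP_eq_reflect QP_eq_reflect by (rule fls_reflect_times_deriv) (simp_all add: lps)
  also have "fls_reflect (PQ * fls_deriv (dQQ dg da)) = - (fls_X ^ 2 * (PP * fls_deriv (dQP dg da)))"
    unfolding PP_eq_reflect dQP_eq_reflect by (rule fls_reflect_times_deriv) (simp_all add: lps)
  also have "fls_reflect (fls_const dt * fls_X_inv) = fls_const dt * fls_X"
    by (simp add: fls_reflect_mult fls_reflect_const fls_reflect_X_inv laurent_poly_const laurent_poly_X_inv)
  finally have refl: "fls_reflect (fls_deriv dS) = - (fls_X ^ 2 * (dPP dg db * fls_deriv QP))
      + - (fls_X ^ 2 * (PP * fls_deriv (dQP dg da))) - fls_const dt * fls_X" .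
  have "fls_deriv (fls_reflect dS) = (fls_X_inv ^ 2 * fls_X ^ 2) * (dPP dg db * fls_deriv QP)
      + (fls_X_inv ^ 2 * fls_X ^ 2) * (PP * fls_deriv (dQP dg da)) + fls_const dt * (fls_X_inv ^ 2 * fls_X)"
    unfolding fls_deriv_reflect[OF lpd] refl by (simp add: algebra_simps)
  then have "fls_deriv (fls_reflect dS) =
      dPP dg db * fls_deriv QP + PP * fls_deriv (dQP dg da) + fls_const dt * fls_X_inv"
    unfolding fls_X_inv_power_2_times_X_power_2 fls_X_inv_power_2_times_X by simp
  then show ?thesis by (simp add: algebra_simps)
qed

lemma residue_reflect_times_variation_form:
  assumes "laurent_poly X"
  shows "fls_residue (fls_reflect X * (dQP dg da * fls_deriv PP - dPP dg db * fls_deriv QP)) =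
         fls_residue (X * (dPQ dg db * fls_deriv QQ - dQQ dg da * fls_deriv PQ))"
proof -
  note lps = assms laurent_poly_variations laurent_poly_big laurent_poly_small
  have "fls_residue (fls_reflect X * (dQP dg da * fls_deriv PP)) = - fls_residue (X * (dQQ dg da * fls_deriv PQ))"
    unfolding dQP_eq_reflect PP_eq_reflect by (rule fls_residue_reflect_times) (simp_all add: lps)
  moreover have "fls_residue (fls_reflect X * (dPP dg db * fls_deriv QP)) =
      - fls_residue (X * (dPQ dg db * fls_deriv QQ))"
    unfolding dPP_eq_reflect QP_eq_reflect by (rule fls_residue_reflect_times) (simp_all add: lps)
  ultimately show ?thesis by (simp only: right_diff_distrib fls_residue_diff) simp
qed

lemma residue_S_P_times_variation_form:
  "fls_residue (S_P * (dQP dg da * fls_deriv PP - dPP dg db * fls_deriv QP)) =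
     fls_residue (PQ * QQ * (dPQ dg db * fls_deriv QQ - dQQ dg da * fls_deriv PQ))
     - fls_residue (S_Q * (dPQ dg db * fls_deriv QQ - dQQ dg da * fls_deriv PQ))"
proof -
  have "S_P = fls_reflect (PQ * QQ - S_Q)"
    unfolding S_P_def PP_eq_reflect QP_eq_reflect
    by (simp add: fls_reflect_diff fls_reflect_mult laurent_poly_mult laurent_poly_small laurent_poly_big
        laurent_poly_S_Q)
  then have "fls_residue (S_P * (dQP dg da * fls_deriv PP - dPP dg db * fls_deriv QP)) =
      fls_residue ((PQ * QQ - S_Q) * (dPQ dg db * fls_deriv QQ - dQQ dg da * fls_deriv PQ))"
    by (simp only: residue_reflect_times_variation_form laurent_poly_diff laurent_poly_mult laurent_poly_small
        laurent_poly_big laurent_poly_S_Q)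
  then show ?thesis by (simp only: left_diff_distrib fls_residue_diff)
qed

lemma nth_0_variation_S_P:
  assumes "laurent_poly dS"
  shows "(dPP dg db * QP + PP * dQP dg da - fls_reflect dS - QP * dPP dg db) $$ 0 =
    - ((dS - PQ * dQQ dg da) $$ 0)"
proof -
  have "dPP dg db * QP + PP * dQP dg da - fls_reflect dS - QP * dPP dg db = PP * dQP dg da - fls_reflect dS"
    by (simp add: algebra_simps)
  also have "\<dots> = fls_reflect (PQ * dQQ dg da - dS)"
    unfolding PP_eq_reflect dQP_eq_reflect
    by (simp add: fls_reflect_diff fls_reflect_mult laurent_poly_mult laurent_poly_small
        laurent_poly_variations assms)
  finally show ?thesis
    by (simp add: fls_reflect_nth_0 laurent_poly_diff laurent_poly_mult laurent_poly_small
        laurent_poly_variations assms)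
qed

lemma variation_identity_arith:
  fixes a1 a2 b1 b2 rG rGP rS rSP rW rWP W0 WP0 t g c1d c2d rPQ :: complex
  assumes "- rG = a1 - a2" "- rGP = b1 - b2" "- rG = - rS + t * rW + t * W0"
    "- rGP = - rSP + t * rWP + t * WP0" "c1d = rW + t * g" "c2d = rWP + t * g" "rSP = rPQ - rS" "WP0 = - W0"
  shows "a1 + b1 + rPQ - t * (c1d + c2d) + 2 * t ^ 2 * g = a2 + b2"
proof -
  have "a1 - a2 + (b1 - b2) = - rPQ + t * rW + t * rWP" using assms by (simp add: algebra_simps)
  then show ?thesis using assms by (simp add: algebra_simps power2_eq_square)
qed

text \<open>Along a variation with \<delta>t = 0, with \<Omega> = \<delta>P dQ - \<delta>Q dP, the variations
  of u_K and U_K are -res(Q^(-K) \<Omega>) and -res(Q^K \<Omega>)/K, and similarly at infinity_P.  The identity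
  says that \<Sum> u_K \<delta>U_K + \<Sum> v_J \<delta>V_J + \<delta>tail = \<Sum> \<delta>u_K U_K + \<Sum> \<delta>v_J V_J: pair \<Omega> with
  G = V_1(Q) + \<Phi>_1 (and its analogue at infinity_P), integrate by parts through the primitives, and
  use the reflection to compare the two points.\<close>

lemma variation_identity:
  assumes lpd: "laurent_poly dS"
    and dS': "fls_deriv dS = dPQ dg db * fls_deriv QQ + PQ * fls_deriv (dQQ dg da)"
  defines "\<Omega>Q \<equiv> dPQ dg db * fls_deriv QQ - dQQ dg da * fls_deriv PQ"
    and "\<Omega>P \<equiv> dQP dg da * fls_deriv PP - dPP dg db * fls_deriv QP"
    and "dS_P \<equiv> dPP dg db * QP + PP * dQP dg da - fls_reflect dS"
  shows "(\<Sum>K\<in>{1..d1+1}. infQ.uA K * (- fls_residue (QQ ^ K * \<Omega>Q) / of_nat K))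
       + (\<Sum>J\<in>{1..d2+1}. infP.uA J * (- fls_residue (PP ^ J * \<Omega>P) / of_nat J))
       + fls_residue (PQ * QQ * \<Omega>Q)
       - t * (fls_residue (dS * (fls_deriv QQ * inverse QQ)
                + S_Q * (fls_deriv (dQQ dg da) * inverse QQ + fls_deriv QQ * (- dQQ dg da * inverse QQ ^ 2)))
            + fls_residue (dS_P * (fls_deriv PP * inverse PP)
                + S_P * (fls_deriv (dPP dg db) * inverse PP + fls_deriv PP * (- dPP dg db * inverse PP ^ 2))))
       + 2 * t ^ 2 * (dg / \<gamma>)
     = (\<Sum>K\<in>{1..d1+1}. (- fls_residue (QQ powi (- int K) * \<Omega>Q)) * infQ.UA K)
       + (\<Sum>J\<in>{1..d2+1}. (- fls_residue (PP powi (- int J) * \<Omega>P)) * infP.UA J)"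
proof -
  define W where "W = dS - PQ * dQQ dg da"
  define W_P where "W_P = dS_P - QP * dPP dg db"
  have dS0: "fls_deriv dS = dPQ dg db * fls_deriv QQ + PQ * fls_deriv (dQQ dg da) - fls_const 0 * fls_X_inv"
    using dS' by simp
  have dS_P': "fls_deriv dS_P = dQP dg da * fls_deriv PP + QP * fls_deriv (dPP dg db) - fls_const 0 * fls_X_inv"
    unfolding dS_P_def by (rule deriv_variation_S_P[OF lpd dS0])
  have gq: "- fls_residue (infQ.GA * \<Omega>Q) =
      (\<Sum>K\<in>{1..d1+1}. infQ.uA K * (- fls_residue (QQ ^ K * \<Omega>Q) / of_nat K))
      - (\<Sum>K\<in>{1..d1+1}. (- fls_residue (QQ powi (- int K) * \<Omega>Q)) * infQ.UA K)"
    unfolding \<Omega>Q_def dPQ_def dQQ_def mult.commute[of "- _" "infQ.UA _"]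
    by (rule infQ.residue_GA_times[OF infQ.variation_form_vanishes_below])
  have gp: "- fls_residue (infP.GA * \<Omega>P) =
      (\<Sum>K\<in>{1..d2+1}. infP.uA K * (- fls_residue (PP ^ K * \<Omega>P) / of_nat K))
      - (\<Sum>K\<in>{1..d2+1}. (- fls_residue (PP powi (- int K) * \<Omega>P)) * infP.UA K)"
    unfolding \<Omega>P_def dPP_def dQP_def mult.commute[of "- _" "infP.UA _"]
    by (rule infP.residue_GA_times[OF infP.variation_form_vanishes_below])
  have s2q: "- fls_residue (infQ.GA * \<Omega>Q) =
      - fls_residue (S_Q * \<Omega>Q) + t * fls_residue (W * (fls_deriv QQ * inverse QQ)) + t * W $$ 0"
    using infQ.residue_GA_variation[OF deriv_S_Q dS0] unfolding \<Omega>Q_def W_def by simp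
  have s2p: "- fls_residue (infP.GA * \<Omega>P) =
      - fls_residue (S_P * \<Omega>P) + t * fls_residue (W_P * (fls_deriv PP * inverse PP)) + t * W_P $$ 0"
    using infP.residue_GA_variation[OF deriv_S_P dS_P'] unfolding \<Omega>P_def W_P_def t_symmetric by simp
  have s3q: "fls_residue (dS * (fls_deriv QQ * inverse QQ)
        + S_Q * (fls_deriv (dQQ dg da) * inverse QQ + fls_deriv QQ * (- dQQ dg da * inverse QQ ^ 2)))
      = fls_residue (W * (fls_deriv QQ * inverse QQ)) + t * (dg / \<gamma>)"
    using infQ.residue_log_deriv_variation[OF deriv_S_Q, of dS "dQQ dg da"] infQ.big_times_inverse_A_nth_0
    unfolding W_def dQQ_def by simp
  have s3p: "fls_residue (dS_P * (fls_deriv PP * inverse PP)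
        + S_P * (fls_deriv (dPP dg db) * inverse PP + fls_deriv PP * (- dPP dg db * inverse PP ^ 2)))
      = fls_residue (W_P * (fls_deriv PP * inverse PP)) + t * (dg / \<gamma>)"
    using infP.residue_log_deriv_variation[OF deriv_S_P, of dS_P "dPP dg db"] infP.big_times_inverse_A_nth_0
    unfolding W_P_def dPP_def t_symmetric by simp
  have gl1: "fls_residue (S_P * \<Omega>P) = fls_residue (PQ * QQ * \<Omega>Q) - fls_residue (S_Q * \<Omega>Q)"
    unfolding \<Omega>P_def \<Omega>Q_def by (rule residue_S_P_times_variation_form)
  have gl2: "W_P $$ 0 = - (W $$ 0)"
    unfolding W_P_def W_def dS_P_def by (rule nth_0_variation_S_P[OF lpd])
  show ?thesis by (rule variation_identity_arith[OF gq gp s2q s2p s3q s3p gl1 gl2])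
qed

end

section \<open>Variation along a curve in parameter space\<close>

lemma has_field_derivative_log_branch:
  assumes "open S" "z \<in> S" "lg holomorphic_on S" "\<forall>x\<in>S. exp (lg x) = x"
  shows "(lg has_field_derivative inverse z) (at z)"
proof -
  have "lg field_differentiable (at z)" using assms holomorphic_on_imp_differentiable_at by blast
  then have L: "(lg has_field_derivative deriv lg z) (at z)" using DERIV_deriv_iff_field_differentiable by blast
  have "((\<lambda>x. exp (lg x)) has_field_derivative exp (lg z) * deriv lg z) (at z)"
    using DERIV_chain'[OF L DERIV_exp] by (simp add: mult.commute)
  moreover have "eventually (\<lambda>x. exp (lg x) = x) (nhds z)"
    using assms(1,2,4) eventually_nhds by blast
  ultimately have "((\<lambda>x. x) has_field_derivative exp (lg z) * deriv lg z) (at z)"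
    using DERIV_cong_ev[of z z "\<lambda>x. exp (lg x)" "\<lambda>x. x"] by simp
  then have "exp (lg z) * deriv lg z = 1" using DERIV_ident DERIV_unique by blast
  then have "z * deriv lg z = 1" using assms(2,4) by simp
  then have "deriv lg z = inverse z" by (metis inverse_unique mult.commute)
  then show ?thesis using L by simp
qed

lemma fls_variation_power_compat:
  "(of_nat K * A ^ (K - 1) * dA) * fls_deriv A = fls_deriv (A ^ K) * (dA :: complex fls)"
  by (simp add: fls_deriv_power algebra_simps)

lemma fls_variation_inverse_power_compat:
  "(of_nat K * inverse A ^ (K - 1) * (- dA * inverse A ^ 2)) * fls_deriv A =
     fls_deriv (inverse A ^ K) * (dA :: complex fls)"
  by (simp add: fls_deriv_power fls_inverse_deriv algebra_simps)

lemma UU_cong: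
  "(\<forall>j\<le>d2. a j = a' j) \<Longrightarrow> (\<forall>j\<le>d1. b j = b' j) \<Longrightarrow> UU d1 d2 g a b K = UU d1 d2 g a' b' K"
  unfolding UU_def Qz_def Pz_def using big_cong[of d2 a a' g] small_cong[of d1 b b' g] by simp

lemma VV_cong:
  "(\<forall>j\<le>d2. a j = a' j) \<Longrightarrow> (\<forall>j\<le>d1. b j = b' j) \<Longrightarrow> VV d1 d2 g a b K = VV d1 d2 g a' b' K"
  unfolding VV_def Pl_def Ql_def using big_cong[of d1 b b' g] small_cong[of d2 a a' g] by simp

locale param_curve =
  fixes d1 d2 :: nat and c :: "complex \<Rightarrow> nat \<Rightarrow> complex" and c' :: "nat \<Rightarrow> complex"
  assumes DERIV_c: "\<And>j. j < NN d1 d2 \<Longrightarrow> ((\<lambda>s. c s j) has_field_derivative c' j) (at 0)"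
    and c_0_0_nonzero: "c 0 0 \<noteq> 0"
begin

definition "gam s = pg (c s)"
definition "al s = pa (c s)"
definition "be s = pb d2 (c s)"
definition "dg = c' 0"
definition "da j = c' (Suc j)"
definition "db j = c' (d2 + 2 + j)"

lemma DERIV_gam: "(gam has_field_derivative dg) (at 0)"
  unfolding gam_def pg_def dg_def using DERIV_c[of 0] by simp

lemma DERIV_al: "\<forall>j\<le>d2. ((\<lambda>s. al s j) has_field_derivative da j) (at 0)"
  unfolding al_def pa_def da_def using DERIV_c by simp

lemma DERIV_be: "\<forall>j\<le>d1. ((\<lambda>s. be s j) has_field_derivative db j) (at 0)"
  unfolding be_def pb_def db_def using DERIV_c by simp

lemma gam_0_nonzero: "gam 0 \<noteq> 0"
  unfolding gam_def pg_def using c_0_0_nonzero .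

definition "QQf s = big (gam s) (al s) d2"
definition "PQf s = small (gam s) (be s) d1"
definition "PPf s = big (gam s) (be s) d1"
definition "QPf s = small (gam s) (al s) d2"
definition "vQQ = big dg da d2"
definition "vPQ = small dg db d1"
definition "vPP = big dg db d1"
definition "vQP = small dg da d2"

definition "\<Omega>Q = vPQ * fls_deriv (QQf 0) - vQQ * fls_deriv (PQf 0)"
definition "\<Omega>P = vQP * fls_deriv (PPf 0) - vPP * fls_deriv (QPf 0)"

lemma has_fls_derivative_QQf: "has_fls_derivative QQf vQQ"
  unfolding QQf_def vQQ_def by (rule has_fls_derivative_big[OF DERIV_gam DERIV_al])

lemma has_fls_derivative_PQf: "has_fls_derivative PQf vPQ"
  unfolding PQf_def vPQ_def by (rule has_fls_derivative_small[OF DERIV_gam DERIV_be])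

lemma has_fls_derivative_PPf: "has_fls_derivative PPf vPP"
  unfolding PPf_def vPP_def by (rule has_fls_derivative_big[OF DERIV_gam DERIV_be])

lemma has_fls_derivative_QPf: "has_fls_derivative QPf vQP"
  unfolding QPf_def vQP_def by (rule has_fls_derivative_small[OF DERIV_gam DERIV_al])

lemma has_fls_derivative_inverse_QQf: "has_fls_derivative (\<lambda>s. inverse (QQf s)) (- vQQ * inverse (QQf 0) ^ 2)"
  unfolding QQf_def vQQ_def by (rule has_fls_derivative_inverse_big[OF DERIV_gam DERIV_al gam_0_nonzero])

lemma has_fls_derivative_inverse_PPf: "has_fls_derivative (\<lambda>s. inverse (PPf s)) (- vPP * inverse (PPf 0) ^ 2)"
  unfolding PPf_def vPP_def by (rule has_fls_derivative_inverse_big[OF DERIV_gam DERIV_be gam_0_nonzero])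

abbreviation "uu_c K s \<equiv> uu d1 d2 (gam s) (al s) (be s) K"
abbreviation "vv_c J s \<equiv> vv d1 d2 (gam s) (al s) (be s) J"
abbreviation "tt_c s \<equiv> tt d1 d2 (gam s) (al s) (be s)"

lemma DERIV_uu: "((\<lambda>s. uu_c K s) has_field_derivative - fls_residue (QQf 0 powi (- int K) * \<Omega>Q)) (at 0)"
proof -
  have "((\<lambda>s. fls_residue (PQf s * inverse (QQf s) ^ K * fls_deriv (QQf s))) has_field_derivative
      fls_residue (inverse (QQf 0) ^ K * \<Omega>Q)) (at 0)"
    unfolding \<Omega>Q_def
    by (rule has_field_derivative_residue_pairing[OF has_fls_derivative_QQf has_fls_derivative_PQf
          has_fls_derivative_power[OF has_fls_derivative_inverse_QQf] fls_variation_inverse_power_compat])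
  from DERIV_minus[OF this] show ?thesis
    unfolding uu_def fres_def Qz_def Pz_def PQf_def QQf_def
    by (simp add: power_int_minus power_inverse mult.assoc del: fls_residue_def)
qed

lemma DERIV_vv: "((\<lambda>s. vv_c J s) has_field_derivative - fls_residue (PPf 0 powi (- int J) * \<Omega>P)) (at 0)"
proof -
  have "((\<lambda>s. fls_residue (QPf s * inverse (PPf s) ^ J * fls_deriv (PPf s))) has_field_derivative
      fls_residue (inverse (PPf 0) ^ J * \<Omega>P)) (at 0)"
    unfolding \<Omega>P_def
    by (rule has_field_derivative_residue_pairing[OF has_fls_derivative_PPf has_fls_derivative_QPf
          has_fls_derivative_power[OF has_fls_derivative_inverse_PPf] fls_variation_inverse_power_compat])
  from DERIV_minus[OF this] show ?thesis
    unfolding vv_def fres_def Pl_def Ql_def QPf_def PPf_def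
    by (simp add: power_int_minus power_inverse mult.assoc del: fls_residue_def)
qed

lemma DERIV_tt: "((\<lambda>s. tt_c s) has_field_derivative fls_residue \<Omega>Q) (at 0)"
proof -
  have "((\<lambda>s. fls_residue (PQf s * (\<lambda>s. 1) s * fls_deriv (QQf s))) has_field_derivative
      fls_residue ((\<lambda>s. 1) 0 * \<Omega>Q)) (at 0)"
    unfolding \<Omega>Q_def
    by (rule has_field_derivative_residue_pairing[OF has_fls_derivative_QQf has_fls_derivative_PQf
          has_fls_derivative_const]) simp
  then show ?thesis unfolding tt_def fres_def Qz_def Pz_def PQf_def QQf_def by simp
qed

text \<open>Residue formulas for U_K, V_J and the tail terms, valid wherever gam s \<noteq> 0, which
  make the dependence on s visibly differentiable.\<close>

definition "UU_res K s = - fls_residue (PQf s * QQf s ^ K * fls_deriv (QQf s)) / of_nat K"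
definition "VV_res J s = - fls_residue (QPf s * PPf s ^ J * fls_deriv (PPf s)) / of_nat J"
definition "half_res s = fls_residue (PQf s ^ 2 * QQf s * fls_deriv (QQf s)) / 2"
definition "S_Qf s = fls_integral (PQf s * fls_deriv (QQf s) - fls_const (tt_c s) * fls_X_inv)"
definition "S_Pf s = PPf s * QPf s - fls_reflect (S_Qf s)"
definition "logres_Q s = fls_residue (S_Qf s * (fls_deriv (QQf s) * inverse (QQf s)))"
definition "logres_P s = fls_residue (S_Pf s * (fls_deriv (PPf s) * inverse (PPf s)))"

definition "F_res lg s = ((\<Sum>K\<in>{1..d1+1}. uu_c K s * UU_res K s) + (\<Sum>J\<in>{1..d2+1}. vv_c J s * VV_res J s)
   + half_res s + tt_c s * (- (logres_Q s + logres_P s)) + 2 * tt_c s ^ 2 * lg (gam s)) / 2"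

lemma FF_eq_F_res:
  assumes "gam s \<noteq> 0"
  shows "FF d1 d2 lg (gam s) (al s) (be s) = F_res lg s"
proof -
  interpret G: spectral_curve d1 d2 "gam s" "al s" "be s" by unfold_locales (rule assms)
  have U: "UU d1 d2 (gam s) (al s) (be s) K = UU_res K s" for K
    unfolding G.UU_eq G.infQ.UA_eq_residue UU_res_def fres_def PQf_def QQf_def by (simp add: mult.assoc)
  have V: "VV d1 d2 (gam s) (al s) (be s) K = VV_res K s" for K
    unfolding G.VV_eq G.infP.UA_eq_residue VV_res_def fres_def QPf_def PPf_def by (simp add: mult.assoc)
  have S: "G.S_Q = S_Qf s" unfolding G.S_Q_def S_Qf_def G.tt_eq[symmetric] PQf_def QQf_def ..
  have SP: "G.S_P = S_Pf s" unfolding G.S_P_def S_Pf_def S PPf_def QPf_def ..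
  have "fres (G.PQ ^ 2 * G.QQ) G.QQ / 2 = half_res s"
    unfolding half_res_def fres_def PQf_def QQf_def ..
  moreover have "fres ((V1 d1 d2 (gam s) (al s) (be s) G.QQ + V2 d1 d2 (gam s) (al s) (be s) G.PQ
      - G.PQ * G.QQ) * fls_X) fls_X_inv = - (logres_Q s + logres_P s)"
    unfolding G.residue_log_term S SP logres_Q_def logres_P_def QQf_def PPf_def ..
  ultimately have "tail d1 d2 lg (gam s) (al s) (be s) =
      half_res s + tt_c s * (- (logres_Q s + logres_P s)) + 2 * tt_c s ^ 2 * lg (gam s)"
    unfolding tail_def Let_def Pz_def Qz_def by simp
  then show ?thesis unfolding FF_def G.twoF_eq_pairings U V F_res_def by simp
qed

lemma eventually_FF_eq_F_res: "eventually (\<lambda>s. FF d1 d2 lg (gam s) (al s) (be s) = F_res lg s) (nhds 0)"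
  using eventually_nonzero_if_DERIV[OF DERIV_gam gam_0_nonzero] by (rule eventually_mono) (rule FF_eq_F_res)

abbreviation "du K \<equiv> - fls_residue (QQf 0 powi (- int K) * \<Omega>Q)"
abbreviation "dv J \<equiv> - fls_residue (PPf 0 powi (- int J) * \<Omega>P)"
abbreviation "dUU K \<equiv> - fls_residue (QQf 0 ^ K * \<Omega>Q) / of_nat K"
abbreviation "dVV J \<equiv> - fls_residue (PPf 0 ^ J * \<Omega>P) / of_nat J"

lemma DERIV_UU_res: "((\<lambda>s. UU_res K s) has_field_derivative dUU K) (at 0)"
proof -
  have "((\<lambda>s. fls_residue (PQf s * QQf s ^ K * fls_deriv (QQf s))) has_field_derivative
      fls_residue (QQf 0 ^ K * \<Omega>Q)) (at 0)"
    unfolding \<Omega>Q_def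
    by (rule has_field_derivative_residue_pairing[OF has_fls_derivative_QQf has_fls_derivative_PQf
          has_fls_derivative_power[OF has_fls_derivative_QQf] fls_variation_power_compat])
  from DERIV_cdivide[OF DERIV_minus[OF this], of "of_nat K"] show ?thesis unfolding UU_res_def by simp
qed

lemma DERIV_VV_res: "((\<lambda>s. VV_res J s) has_field_derivative dVV J) (at 0)"
proof -
  have "((\<lambda>s. fls_residue (QPf s * PPf s ^ J * fls_deriv (PPf s))) has_field_derivative
      fls_residue (PPf 0 ^ J * \<Omega>P)) (at 0)"
    unfolding \<Omega>P_def
    by (rule has_field_derivative_residue_pairing[OF has_fls_derivative_PPf has_fls_derivative_QPf
          has_fls_derivative_power[OF has_fls_derivative_PPf] fls_variation_power_compat])
  from DERIV_cdivide[OF DERIV_minus[OF this], of "of_nat J"] show ?thesis unfolding VV_res_def by simp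
qed

lemma DERIV_half_res: "(half_res has_field_derivative fls_residue (PQf 0 * QQf 0 * \<Omega>Q)) (at 0)"
  unfolding half_res_def[abs_def] \<Omega>Q_def
  by (rule has_field_derivative_residue_square_pairing[OF has_fls_derivative_QQf has_fls_derivative_PQf])

definition "vS_Q = fls_integral (vPQ * fls_deriv (QQf 0) + PQf 0 * fls_deriv vQQ
  - fls_const (fls_residue \<Omega>Q) * fls_X_inv)"
definition "vS_P = vPP * QPf 0 + PPf 0 * vQP - fls_reflect vS_Q"

lemma has_fls_derivative_S_Qf: "has_fls_derivative S_Qf vS_Q"
proof -
  have "has_fls_derivative (\<lambda>s. fls_const (tt_c s) * fls_X_inv)
      (fls_const (fls_residue \<Omega>Q) * fls_X_inv + fls_const (tt_c 0) * 0)"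
    using has_fls_derivative_mult[OF has_fls_derivative_fls_const[OF DERIV_tt]
        has_fls_derivative_const[of fls_X_inv]] by simp
  from has_fls_derivative_integral[OF has_fls_derivative_diff[OF has_fls_derivative_mult[OF
        has_fls_derivative_PQf has_fls_derivative_deriv[OF has_fls_derivative_QQf]] this]]
  show ?thesis unfolding S_Qf_def[abs_def] vS_Q_def by simp
qed

lemma S_Qf_vanishes_above: "fls_vanishes_above (S_Qf s) (int d2 + 1)"
proof -
  have "fls_vanishes_above (PQf s * fls_deriv (QQf s)) (1 + (int d2 - 1))"
    unfolding PQf_def QQf_def
    by (intro fls_vanishes_above_mult fls_vanishes_above_deriv fls_vanishes_above_small fls_vanishes_above_big)
  moreover have "fls_vanishes_above (fls_const (tt_c s) * fls_X_inv) (0 + -1)"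
    by (intro fls_vanishes_above_mult fls_vanishes_above_const fls_vanishes_above_X_inv)
  ultimately have "fls_vanishes_above (PQf s * fls_deriv (QQf s) - fls_const (tt_c s) * fls_X_inv) (int d2)"
    by (intro fls_vanishes_above_diff) (auto elim: fls_vanishes_above_mono)
  then show ?thesis unfolding S_Qf_def by (rule fls_vanishes_above_integral)
qed

lemma has_fls_derivative_S_Pf: "has_fls_derivative S_Pf vS_P"
  unfolding S_Pf_def[abs_def] vS_P_def
  using has_fls_derivative_diff[OF has_fls_derivative_mult[OF has_fls_derivative_PPf has_fls_derivative_QPf]
      has_fls_derivative_reflect[OF has_fls_derivative_S_Qf, of "int d2 + 1"]] S_Qf_vanishes_above
  by simp

definition "dlogres_Q = fls_residue (vS_Q * (fls_deriv (QQf 0) * inverse (QQf 0)) +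
    S_Qf 0 * (fls_deriv vQQ * inverse (QQf 0) + fls_deriv (QQf 0) * (- vQQ * inverse (QQf 0) ^ 2)))"
definition "dlogres_P = fls_residue (vS_P * (fls_deriv (PPf 0) * inverse (PPf 0)) +
    S_Pf 0 * (fls_deriv vPP * inverse (PPf 0) + fls_deriv (PPf 0) * (- vPP * inverse (PPf 0) ^ 2)))"

lemma DERIV_logres_Q: "(logres_Q has_field_derivative dlogres_Q) (at 0)"
  unfolding logres_Q_def[abs_def] dlogres_Q_def
  using has_fls_derivative_residue[OF has_fls_derivative_mult[OF has_fls_derivative_S_Qf
        has_fls_derivative_mult[OF has_fls_derivative_deriv[OF has_fls_derivative_QQf]
          has_fls_derivative_inverse_QQf]]] by simp

lemma DERIV_logres_P: "(logres_P has_field_derivative dlogres_P) (at 0)"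
  unfolding logres_P_def[abs_def] dlogres_P_def
  using has_fls_derivative_residue[OF has_fls_derivative_mult[OF has_fls_derivative_S_Pf
        has_fls_derivative_mult[OF has_fls_derivative_deriv[OF has_fls_derivative_PPf]
          has_fls_derivative_inverse_PPf]]] by simp

lemma DERIV_F_res:
  assumes lg: "(lg has_field_derivative inverse (gam 0)) (at (gam 0))" and dt: "fls_residue \<Omega>Q = 0"
  shows "(F_res lg has_field_derivative
     ((\<Sum>K\<in>{1..d1+1}. uu_c K 0 * dUU K + du K * UU_res K 0)
      + (\<Sum>J\<in>{1..d2+1}. vv_c J 0 * dVV J + dv J * VV_res J 0)
      + fls_residue (PQf 0 * QQf 0 * \<Omega>Q) + tt_c 0 * (- (dlogres_Q + dlogres_P))
      + 2 * tt_c 0 ^ 2 * (dg / gam 0)) / 2) (at 0)"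
proof -
  have DERIV_tt0: "((\<lambda>s. tt_c s) has_field_derivative 0) (at 0)" using DERIV_tt unfolding dt .
  have sQ: "((\<lambda>s. \<Sum>K\<in>{1..d1+1}. uu_c K s * UU_res K s) has_field_derivative
      (\<Sum>K\<in>{1..d1+1}. uu_c K 0 * dUU K + du K * UU_res K 0)) (at 0)"
    by (intro DERIV_sum DERIV_mult' DERIV_uu DERIV_UU_res)
  have sP: "((\<lambda>s. \<Sum>J\<in>{1..d2+1}. vv_c J s * VV_res J s) has_field_derivative
      (\<Sum>J\<in>{1..d2+1}. vv_c J 0 * dVV J + dv J * VV_res J 0)) (at 0)"
    by (intro DERIV_sum DERIV_mult' DERIV_vv DERIV_VV_res)
  have sL: "((\<lambda>s. tt_c s * (- (logres_Q s + logres_P s))) has_field_derivative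
      tt_c 0 * (- (dlogres_Q + dlogres_P)) + 0 * (- (logres_Q 0 + logres_P 0))) (at 0)"
    by (rule DERIV_mult'[OF DERIV_tt0 DERIV_minus[OF DERIV_add[OF DERIV_logres_Q DERIV_logres_P]]])
  have sG: "((\<lambda>s. 2 * tt_c s ^ 2 * lg (gam s)) has_field_derivative
      2 * (tt_c 0 ^ 2 * (inverse (gam 0) * dg) + (of_nat 2 * (0 * tt_c 0 ^ (2 - Suc 0))) * lg (gam 0))) (at 0)"
    using DERIV_cmult[OF DERIV_mult'[OF DERIV_power[OF DERIV_tt0, of 2] DERIV_chain'[OF DERIV_gam lg]], of 2]
    by (simp add: mult.assoc)
  have "(F_res lg has_field_derivative
     ((\<Sum>K\<in>{1..d1+1}. uu_c K 0 * dUU K + du K * UU_res K 0)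
      + (\<Sum>J\<in>{1..d2+1}. vv_c J 0 * dVV J + dv J * VV_res J 0)
      + fls_residue (PQf 0 * QQf 0 * \<Omega>Q)
      + (tt_c 0 * (- (dlogres_Q + dlogres_P)) + 0 * (- (logres_Q 0 + logres_P 0)))
      + 2 * (tt_c 0 ^ 2 * (inverse (gam 0) * dg) + (of_nat 2 * (0 * tt_c 0 ^ (2 - Suc 0))) * lg (gam 0))) / 2)
      (at 0)"
    unfolding F_res_def[abs_def]
    by (rule DERIV_cdivide[OF DERIV_add[OF DERIV_add[OF DERIV_add[OF DERIV_add[OF sQ sP] DERIV_half_res] sL] sG]])
  moreover have "tt_c 0 * (- (dlogres_Q + dlogres_P)) + 0 * (- (logres_Q 0 + logres_P 0)) =
      tt_c 0 * (- (dlogres_Q + dlogres_P))"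
    by simp
  moreover have "2 * (tt_c 0 ^ 2 * (inverse (gam 0) * dg) + (of_nat 2 * (0 * tt_c 0 ^ (2 - Suc 0))) * lg (gam 0))
      = 2 * tt_c 0 ^ 2 * (dg / gam 0)"
    by (simp add: divide_inverse)
  ultimately show ?thesis by (simp only:)
qed

lemma deriv_vS_Q:
  assumes "fls_residue \<Omega>Q = 0"
  shows "fls_deriv vS_Q = vPQ * fls_deriv (QQf 0) + PQf 0 * fls_deriv vQQ"
proof -
  have "vPQ * fls_deriv (QQf 0) + PQf 0 * fls_deriv vQQ = \<Omega>Q + fls_deriv (PQf 0 * vQQ)"
    unfolding \<Omega>Q_def by (simp add: algebra_simps)
  then have "fls_residue (vPQ * fls_deriv (QQf 0) + PQf 0 * fls_deriv vQQ) = 0"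
    using assms by (simp only: fls_residue_add fls_residue_deriv) simp
  then show ?thesis unfolding vS_Q_def assms by (subst fls_deriv_fls_integral) simp_all
qed

lemma half_variation_arith:
  fixes A1 A2 B1 B2 h t cc g :: complex
  assumes "A2 + B2 + h - t * cc + g = A1 + B1"
  shows "((A2 + A1) + (B2 + B1) + h + t * (- cc) + g) / 2 = A1 + B1"
  using assms by (simp add: field_simps)

text \<open>Along a curve on which t is constant, the variation of F is \<Sum> \<delta>u_K U_K + \<Sum> \<delta>v_J V_J:
  the other half of the variation of 2F equals this by the variation identity.\<close>

lemma FF_has_derivative:
  assumes lg: "(lg has_field_derivative inverse (gam 0)) (at (gam 0))" and dt: "fls_residue \<Omega>Q = 0"
  shows "((\<lambda>s. FF d1 d2 lg (gam s) (al s) (be s)) has_field_derivative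
    (\<Sum>K\<in>{1..d1+1}. du K * UU_res K 0) + (\<Sum>J\<in>{1..d2+1}. dv J * VV_res J 0)) (at 0)"
proof -
  interpret G: spectral_curve d1 d2 "gam 0" "al 0" "be 0" by unfold_locales (rule gam_0_nonzero)
  have v: "G.dPQ dg db = vPQ" "G.dQQ dg da = vQQ" "G.dPP dg db = vPP" "G.dQP dg da = vQP"
    unfolding G.dPQ_def G.dQQ_def G.dPP_def G.dQP_def vPQ_def vQQ_def vPP_def vQP_def by simp_all
  have f: "G.QQ = QQf 0" "G.PQ = PQf 0" "G.PP = PPf 0" "G.QP = QPf 0"
    unfolding QQf_def PQf_def PPf_def QPf_def by simp_all
  have S: "G.S_Q = S_Qf 0" unfolding G.S_Q_def S_Qf_def G.tt_eq[symmetric] f ..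
  have SP: "G.S_P = S_Pf 0" unfolding G.S_P_def S_Pf_def S f ..
  have U: "G.infQ.UA K = UU_res K 0" "G.infP.UA K = VV_res K 0" for K
    unfolding G.infQ.UA_eq_residue G.infP.UA_eq_residue UU_res_def VV_res_def fres_def f
    by (simp_all add: mult.assoc)
  have u: "G.infQ.uA K = uu_c K 0" "G.infP.uA K = vv_c K 0" for K
    using G.uu_eq G.vv_eq by simp_all
  have lpd: "laurent_poly vS_Q" unfolding vS_Q_def
    by (intro laurent_poly_integral laurent_poly_diff laurent_poly_add laurent_poly_mult laurent_poly_deriv
        laurent_poly_const laurent_poly_X_inv)
       (simp_all add: vPQ_def vQQ_def QQf_def PQf_def laurent_poly_big laurent_poly_small)
  have "(\<Sum>K\<in>{1..d1+1}. uu_c K 0 * dUU K) + (\<Sum>J\<in>{1..d2+1}. vv_c J 0 * dVV J)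
      + fls_residue (PQf 0 * QQf 0 * \<Omega>Q) - tt_c 0 * (dlogres_Q + dlogres_P) + 2 * tt_c 0 ^ 2 * (dg / gam 0)
     = (\<Sum>K\<in>{1..d1+1}. du K * UU_res K 0) + (\<Sum>J\<in>{1..d2+1}. dv J * VV_res J 0)"
    using G.variation_identity[OF lpd, of dg db da, unfolded v f, OF deriv_vS_Q[OF dt]]
    unfolding S SP U u G.tt_eq[symmetric] \<Omega>Q_def[symmetric] \<Omega>P_def[symmetric] vS_P_def[symmetric]
      dlogres_Q_def[symmetric] dlogres_P_def[symmetric] .
  from DERIV_F_res[OF lg dt, unfolded sum.distrib, unfolded half_variation_arith[OF this]]
  show ?thesis using eventually_FF_eq_F_res DERIV_cong_ev by fastforce
qed

lemma UU_res_0: "UU_res K 0 = UU d1 d2 (gam 0) (al 0) (be 0) K"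
proof -
  interpret G: spectral_curve d1 d2 "gam 0" "al 0" "be 0" by unfold_locales (rule gam_0_nonzero)
  show ?thesis unfolding G.UU_eq G.infQ.UA_eq_residue UU_res_def fres_def PQf_def QQf_def
    by (simp add: mult.assoc)
qed

lemma VV_res_0: "VV_res J 0 = VV d1 d2 (gam 0) (al 0) (be 0) J"
proof -
  interpret G: spectral_curve d1 d2 "gam 0" "al 0" "be 0" by unfold_locales (rule gam_0_nonzero)
  show ?thesis unfolding G.VV_eq G.infP.UA_eq_residue VV_res_def fres_def QPf_def PPf_def
    by (simp add: mult.assoc)
qed

context
  fixes i p
  assumes line: "eventually (\<lambda>s. \<forall>k<NN d1 d2. coord d1 d2 k (c s) = coord d1 d2 k p + (if k = i then s else 0))
    (nhds 0)"
begin

lemma DERIV_coord: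
  assumes "k < NN d1 d2"
  shows "((\<lambda>s. coord d1 d2 k (c s)) has_field_derivative (if k = i then 1 else 0)) (at 0)"
proof -
  have e: "eventually (\<lambda>s. coord d1 d2 k (c s) = coord d1 d2 k p + (if k = i then s else 0)) (nhds 0)"
    using line by (rule eventually_mono) (use assms in auto)
  have "((\<lambda>s. coord d1 d2 k p + (if k = i then s else 0)) has_field_derivative
      (if k = i then 1 else 0)) (at 0)"
    by (cases "k = i") (auto intro!: derivative_eq_intros)
  then show ?thesis using DERIV_cong_ev[OF refl e refl] by simp
qed

lemma du_along_line:
  assumes K: "K \<in> {1..d1+1}"
  shows "du K = (if K - 1 = i then 1 else 0)"
proof -
  have "coord d1 d2 (K - 1) (c s) = uu_c K s" for s
    unfolding coord_def gam_def al_def be_def using K by auto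
  moreover have "K - 1 < NN d1 d2" using K by auto
  ultimately have "((\<lambda>s. uu_c K s) has_field_derivative (if K - 1 = i then 1 else 0)) (at 0)"
    using DERIV_coord[of "K - 1"] by simp
  then show ?thesis using DERIV_uu DERIV_unique by blast
qed

lemma dv_along_line:
  assumes J: "J \<in> {1..d2+1}"
  shows "dv J = (if d1 + J = i then 1 else 0)"
proof -
  have "coord d1 d2 (d1 + J) (c s) = vv_c J s" for s
    unfolding coord_def gam_def al_def be_def using J by auto
  moreover have "d1 + J < NN d1 d2" using J by auto
  ultimately have "((\<lambda>s. vv_c J s) has_field_derivative (if d1 + J = i then 1 else 0)) (at 0)"
    using DERIV_coord[of "d1 + J"] by simp
  then show ?thesis using DERIV_vv DERIV_unique by blast
qed

lemma dt_along_line: "fls_residue \<Omega>Q = (if d1 + d2 + 2 = i then 1 else 0)"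
proof -
  have "coord d1 d2 (d1 + d2 + 2) (c s) = tt_c s" for s
    unfolding coord_def gam_def al_def be_def by auto
  then have "((\<lambda>s. tt_c s) has_field_derivative (if d1 + d2 + 2 = i then 1 else 0)) (at 0)"
    using DERIV_coord[of "d1 + d2 + 2"] by simp
  then show ?thesis using DERIV_tt DERIV_unique by blast
qed

end

end

text \<open>Only the coordinate lines in the directions u_K, v_J are needed, along which t is constant.\<close>

lemma FF_derivative_along_coordinate_line:
  assumes p: "pg p \<noteq> 0" and lg: "(lg has_field_derivative inverse (pg p)) (at (pg p))"
    and cl: "coord_line d1 d2 i p c" and i: "i \<le> d1 + d2 + 1"
  shows "((\<lambda>s. FF d1 d2 lg (pg (c s)) (pa (c s)) (pb d2 (c s))) has_field_derivative
      (\<Sum>K\<in>{1..d1+1}. (if K - 1 = i then 1 else 0) * UU d1 d2 (pg p) (pa p) (pb d2 p) K)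
      + (\<Sum>J\<in>{1..d2+1}. (if d1 + J = i then 1 else 0) * VV d1 d2 (pg p) (pa p) (pb d2 p) J)) (at 0)"
proof -
  have c0: "\<forall>j<NN d1 d2. c 0 j = p j"
    and diff: "\<forall>j<NN d1 d2. (\<lambda>s. c s j) field_differentiable (at 0)"
    and line: "eventually (\<lambda>s. \<forall>k<NN d1 d2. coord d1 d2 k (c s) = coord d1 d2 k p + (if k = i then s else 0))
      (nhds 0)"
    using cl unfolding coord_line_def by auto
  define c' where "c' j = deriv (\<lambda>s. c s j) 0" for j
  interpret C: param_curve d1 d2 c c'
    using diff c0 p unfolding c'_def pg_def
    by unfold_locales (auto simp: DERIV_deriv_iff_field_differentiable)
  have gam: "C.gam 0 = pg p" unfolding C.gam_def pg_def using c0 by simp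
  have ab: "\<forall>j\<le>d2. C.al 0 j = pa p j" "\<forall>j\<le>d1. C.be 0 j = pb d2 p j"
    unfolding C.al_def C.be_def pa_def pb_def using c0 by auto
  have "fls_residue C.\<Omega>Q = 0" using C.dt_along_line[OF line] i by simp
  note FF' = C.FF_has_derivative[OF lg[folded gam] this]
  have "(\<Sum>K\<in>{1..d1+1}. C.du K * C.UU_res K 0) =
      (\<Sum>K\<in>{1..d1+1}. (if K - 1 = i then 1 else 0) * UU d1 d2 (pg p) (pa p) (pb d2 p) K)"
    by (intro sum.cong refl) (simp only: C.du_along_line[OF line] C.UU_res_0 gam UU_cong[OF ab])
  moreover have "(\<Sum>J\<in>{1..d2+1}. C.dv J * C.VV_res J 0) =
      (\<Sum>J\<in>{1..d2+1}. (if d1 + J = i then 1 else 0) * VV d1 d2 (pg p) (pa p) (pb d2 p) J)"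
    by (intro sum.cong refl) (simp only: C.dv_along_line[OF line] C.VV_res_0 gam VV_cong[OF ab])
  ultimately show ?thesis using FF' unfolding C.gam_def C.al_def C.be_def by simp
qed

lemma has_partial_FF_u:
  assumes K: "K \<in> {1..d1+1}" and "pg p \<noteq> 0" "(lg has_field_derivative inverse (pg p)) (at (pg p))"
  shows "has_partial d1 d2 (\<lambda>q. FF d1 d2 lg (pg q) (pa q) (pb d2 q)) (K - 1) p (UU d1 d2 (pg p) (pa p) (pb d2 p) K)"
  unfolding has_partial_def
proof (intro allI impI)
  fix c assume cl: "coord_line d1 d2 (K - 1) p c"
  have i: "K - 1 \<le> d1 + d2 + 1" using K by auto
  note FF' = FF_derivative_along_coordinate_line[OF assms(2,3) cl i]
  have "(\<Sum>K'\<in>{1..d1+1}. (if K' - 1 = K - 1 then 1 else 0) * UU d1 d2 (pg p) (pa p) (pb d2 p) K') =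
      (\<Sum>K'\<in>{1..d1+1}. if K' = K then UU d1 d2 (pg p) (pa p) (pb d2 p) K' else 0)"
    by (intro sum.cong refl) (use K in auto)
  also have "\<dots> = UU d1 d2 (pg p) (pa p) (pb d2 p) K" using K by simp
  finally have u: "(\<Sum>K'\<in>{1..d1+1}. (if K' - 1 = K - 1 then 1 else 0) * UU d1 d2 (pg p) (pa p) (pb d2 p) K') =
      UU d1 d2 (pg p) (pa p) (pb d2 p) K" .
  have v: "(\<Sum>J\<in>{1..d2+1}. (if d1 + J = K - 1 then 1 else 0) * VV d1 d2 (pg p) (pa p) (pb d2 p) J) = 0"
    by (intro sum.neutral) (use K in auto)
  show "((\<lambda>s. FF d1 d2 lg (pg (c s)) (pa (c s)) (pb d2 (c s))) has_field_derivative
      UU d1 d2 (pg p) (pa p) (pb d2 p) K) (at 0)"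
    using FF' unfolding u v by simp
qed

lemma has_partial_FF_v:
  assumes J: "J \<in> {1..d2+1}" and "pg p \<noteq> 0" "(lg has_field_derivative inverse (pg p)) (at (pg p))"
  shows "has_partial d1 d2 (\<lambda>q. FF d1 d2 lg (pg q) (pa q) (pb d2 q)) (d1 + J) p (VV d1 d2 (pg p) (pa p) (pb d2 p) J)"
  unfolding has_partial_def
proof (intro allI impI)
  fix c assume cl: "coord_line d1 d2 (d1 + J) p c"
  have i: "d1 + J \<le> d1 + d2 + 1" using J by auto
  note FF' = FF_derivative_along_coordinate_line[OF assms(2,3) cl i]
  have u: "(\<Sum>K\<in>{1..d1+1}. (if K - 1 = d1 + J then 1 else 0) * UU d1 d2 (pg p) (pa p) (pb d2 p) K) = 0"
    by (intro sum.neutral) (use J in auto)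
  have "(\<Sum>J'\<in>{1..d2+1}. (if d1 + J' = d1 + J then 1 else 0) * VV d1 d2 (pg p) (pa p) (pb d2 p) J') =
      (\<Sum>J'\<in>{1..d2+1}. if J' = J then VV d1 d2 (pg p) (pa p) (pb d2 p) J' else 0)"
    by (intro sum.cong refl) auto
  also have "\<dots> = VV d1 d2 (pg p) (pa p) (pb d2 p) J" using J by simp
  finally have v: "(\<Sum>J'\<in>{1..d2+1}. (if d1 + J' = d1 + J then 1 else 0) * VV d1 d2 (pg p) (pa p) (pb d2 p) J') =
      VV d1 d2 (pg p) (pa p) (pb d2 p) J" .
  show "((\<lambda>s. FF d1 d2 lg (pg (c s)) (pa (c s)) (pb d2 (c s))) has_field_derivative
      VV d1 d2 (pg p) (pa p) (pb d2 p) J) (at 0)"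
    using FF' unfolding u v by simp
qed

theorem theorem2p1:
  fixes d1 d2 :: nat
  assumes "d1 \<ge> 1" and "d2 \<ge> 1"
  shows
    "(\<forall>lg \<gamma> \<alpha> \<beta>. \<gamma> \<noteq> 0 \<longrightarrow>
        twoF d1 d2 lg \<gamma> \<alpha> \<beta> =
          (\<Sum>K\<in>{1..d1+1}. uu d1 d2 \<gamma> \<alpha> \<beta> K * UU d1 d2 \<gamma> \<alpha> \<beta> K)
        + (\<Sum>J\<in>{1..d2+1}. vv d1 d2 \<gamma> \<alpha> \<beta> J * VV d1 d2 \<gamma> \<alpha> \<beta> J)
        + tail d1 d2 lg \<gamma> \<alpha> \<beta>)
   \<and> (\<forall>p lg S. pg p \<noteq> 0 \<and> jac_nonsingular d1 d2 p \<and>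
        open S \<and> pg p \<in> S \<and> lg holomorphic_on S \<and> (\<forall>x\<in>S. exp (lg x) = x) \<longrightarrow>
        (\<forall>K\<in>{1..d1+1}. has_partial d1 d2 (\<lambda>q. FF d1 d2 lg (pg q) (pa q) (pb d2 q)) (K - 1) p
                          (UU d1 d2 (pg p) (pa p) (pb d2 p) K))
      \<and> (\<forall>J\<in>{1..d2+1}. has_partial d1 d2 (\<lambda>q. FF d1 d2 lg (pg q) (pa q) (pb d2 q)) (d1 + J) p
                          (VV d1 d2 (pg p) (pa p) (pb d2 p) J)))"
proof (intro conjI allI impI ballI)
  fix lg \<gamma> \<alpha> \<beta> assume "(\<gamma> :: complex) \<noteq> 0"
  then interpret spectral_curve d1 d2 \<gamma> \<alpha> \<beta> by unfold_locales
  show "twoF d1 d2 lg \<gamma> \<alpha> \<beta> =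
      (\<Sum>K\<in>{1..d1+1}. uu d1 d2 \<gamma> \<alpha> \<beta> K * UU d1 d2 \<gamma> \<alpha> \<beta> K)
      + (\<Sum>J\<in>{1..d2+1}. vv d1 d2 \<gamma> \<alpha> \<beta> J * VV d1 d2 \<gamma> \<alpha> \<beta> J) + tail d1 d2 lg \<gamma> \<alpha> \<beta>"
    by (rule twoF_eq_pairings)
next
  fix p lg S K J
  assume h: "pg p \<noteq> 0 \<and> jac_nonsingular d1 d2 p \<and> open S \<and> pg p \<in> S \<and> lg holomorphic_on S
    \<and> (\<forall>x\<in>S. exp (lg x) = x)"
  then have lg: "(lg has_field_derivative inverse (pg p)) (at (pg p))"
    using has_field_derivative_log_branch[of S "pg p" lg] by blast
  show "K \<in> {1..d1+1} \<Longrightarrow> has_partial d1 d2 (\<lambda>q. FF d1 d2 lg (pg q) (pa q) (pb d2 q)) (K - 1) p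
      (UU d1 d2 (pg p) (pa p) (pb d2 p) K)"
    using has_partial_FF_u h lg by blast
  show "J \<in> {1..d2+1} \<Longrightarrow> has_partial d1 d2 (\<lambda>q. FF d1 d2 lg (pg q) (pa q) (pb d2 q)) (d1 + J) p
      (VV d1 d2 (pg p) (pa p) (pb d2 p) J)"
    using has_partial_FF_v h lg by blast
qed

end
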